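(* For every $m\ge1$, the sequences $\big(\#R_n(1/2/\ldots/m)\big)_{n\ge0}$ and $\big(\#R_n(12\ldots m)\big)_{n\ge0}$ are P-recursive. Furthermore, for every partition $\pi$ of $[3]$, the sequence $\big(\#R_n(\pi)\big)_{n\ge0}$ is P-recursive.
   Context: $\Pi_n$ is the set of partitions of $[n]$. A partition $B_1/\ldots/B_k$ is in canonical order if $\min B_1<\cdots<\min B_k$; its restricted growth function is $\rho(\pi)=a_1\ldots a_n$ where $a_i$ is the index of the block containing $i$. A sequence contains $r$ if some subsequence standardizes (order-preserving relabeling of values onto $1,2,\ldots$) to $r$. $\sigma$ R-avoids $\pi$ if $\rho(\sigma)$ does not contain $\rho(\pi)$; $R_n(\pi)$ is the set of $\sigma\in\Pi_n$ R-avoiding $\pi$. A sequence $(a_n)$ is P-recursive if there are polynomials $P_0,\ldots,P_k$, not all zero, with $\sum_{i=0}^kP_i(n)a_{n+i}=0$ for all $n\ge0$. *)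

theory Defs
  imports "HOL-Library.Disjoint_Sets" "HOL-Computational_Algebra.Polynomial"
begin

definition Pi_set :: "nat \<Rightarrow> nat set set set" where
  "Pi_set n = {\<sigma>. partition_on {1..n} \<sigma>}"

text \<open>Restricted growth function: a_i is the index of the block containing i
  when the blocks are listed in canonical order (by increasing minima), i.e. the
  number of blocks whose minimum is at most the minimum of the block of i.\<close>
definition block_of :: "nat set set \<Rightarrow> nat \<Rightarrow> nat set" where
  "block_of \<sigma> i = (THE B. B \<in> \<sigma> \<and> i \<in> B)"

definition rgf :: "nat set set \<Rightarrow> nat list" where
  "rgf \<sigma> = map (\<lambda>i. card {B \<in> \<sigma>. Min B \<le> Min (block_of \<sigma> i)})
                (sorted_list_of_set (\<Union>\<sigma>))"

text \<open>Standardization: order-preserving relabeling of the values onto 1,2,...\<close>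
definition standardize :: "nat list \<Rightarrow> nat list" where
  "standardize s = map (\<lambda>x. card {y \<in> set s. y \<le> x}) s"

definition contains :: "nat list \<Rightarrow> nat list \<Rightarrow> bool" where
  "contains w r \<longleftrightarrow> (\<exists>I. standardize (nths w I) = r)"

definition R_avoid :: "nat \<Rightarrow> nat set set \<Rightarrow> nat set set set" where
  "R_avoid n \<pi> = {\<sigma> \<in> Pi_set n. \<not> contains (rgf \<sigma>) (rgf \<pi>)}"

definition singletons_part :: "nat \<Rightarrow> nat set set" where
  "singletons_part m = (\<lambda>i. {i}) ` {1..m}"

definition one_block_part :: "nat \<Rightarrow> nat set set" where
  "one_block_part m = {{1..m}}"

definition P_recursive :: "(nat \<Rightarrow> nat) \<Rightarrow> bool" where
  "P_recursive a \<longleftrightarrow> (\<exists>k (P :: nat \<Rightarrow> rat poly). (\<exists>i\<le>k. P i \<noteq> 0) \<and>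
     (\<forall>n. (\<Sum>i\<le>k. poly (P i) (of_nat n) * of_nat (a (n + i))) = 0))"

end

theory Submission
  imports Defs "HOL-Library.Sublist" "HOL-Combinatorics.Stirling"
begin

text \<open>The restricted growth function is a bijection between set partitions of \<open>[n]\<close> and
  restricted growth words of length \<open>n\<close>, so \<open>#R\<^sub>n(\<pi>)\<close> counts such words avoiding the
  word \<open>\<rho>(\<pi>)\<close>. A restricted growth word contains \<open>1 2 \<dots> m\<close> iff it uses at least \<open>m\<close>
  letters, so \<open>#R\<^sub>n(1/2/\<dots>/m)\<close> is the sum of the Stirling numbers \<open>S(n, k)\<close> over \<open>k < m\<close>;
  for fixed \<open>k\<close>, the polynomial \<open>(E - 1) \<cdots> (E - k)\<close> in the shift operator \<open>E\<close> maps
  \<open>n \<mapsto> S(n, k)\<close> to the indicator of \<open>n = 0\<close>. A partition R-avoids the one-block partition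
  \<open>12\<dots>m\<close> iff all its blocks have fewer than \<open>m\<close> elements; removing the block of one element
  gives a recurrence with binomial, hence polynomial, coefficients. The remaining partitions of
  \<open>[3]\<close> have restricted growth functions \<open>1 1 2\<close>, \<open>1 2 1\<close> and \<open>1 2 2\<close>; in each case the
  avoiding words of length \<open>n + 2\<close> are the images of those of length \<open>n + 1\<close> under two
  injections with disjoint images, so the counts double from \<open>n = 1\<close> on.\<close>

section \<open>Restricted growth words\<close>

definition max_letter :: "nat list \<Rightarrow> nat" where
  "max_letter w = Max (insert 0 (set w))"

definition is_rgf :: "nat list \<Rightarrow> bool" where
  "is_rgf w \<longleftrightarrow> (\<forall>i < length w. 0 < w ! i \<and> w ! i \<le> Suc (max_letter (take i w)))"

definition RGF :: "nat \<Rightarrow> nat list set" where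
  "RGF n = {w. length w = n \<and> is_rgf w}"

lemma max_letter_Nil [simp]: "max_letter [] = 0"
  by (simp add: max_letter_def)

lemma max_letter_Cons: "max_letter (x # w) = max x (max_letter w)"
  unfolding max_letter_def using Max_insert[of "insert 0 (set w)" x]
  by (simp add: insert_commute)

lemma max_letter_snoc [simp]: "max_letter (w @ [x]) = max (max_letter w) x"
  unfolding max_letter_def using Max_insert[of "insert 0 (set w)" x]
  by (simp add: insert_commute max.commute)

lemma max_letter_ge: "x \<in> set w \<Longrightarrow> x \<le> max_letter w"
  by (simp add: max_letter_def)

lemma max_letter_in_set: "w \<noteq> [] \<Longrightarrow> max_letter w \<in> set w"
proof (induction w rule: rev_induct)
  case (snoc x xs)
  then show ?case by (cases "xs = []") (auto simp: max_def max_letter_def)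
qed simp

lemma is_rgf_Nil [simp]: "is_rgf []"
  by (simp add: is_rgf_def)

lemma is_rgf_snoc: "is_rgf (w @ [x]) \<longleftrightarrow> is_rgf w \<and> 0 < x \<and> x \<le> Suc (max_letter w)"
  unfolding is_rgf_def
  by (auto simp: nth_append less_Suc_eq all_conj_distrib)

lemma is_rgf_take: "is_rgf w \<Longrightarrow> is_rgf (take k w)"
  unfolding is_rgf_def by (auto simp: min_def)

lemma set_is_rgf: "is_rgf w \<Longrightarrow> set w = {1..max_letter w}"
proof (induction w rule: rev_induct)
  case (snoc x w)
  then have IH: "set w = {1..max_letter w}" and x: "0 < x" "x \<le> Suc (max_letter w)"
    by (simp_all add: is_rgf_snoc)
  show ?case
  proof (cases "x \<le> max_letter w")
    case True
    then have "x \<in> set w" using IH x by simp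
    then show ?thesis using IH True by (simp add: insert_absorb max_def)
  next
    case False
    then have "x = Suc (max_letter w)" using x by simp
    then show ?thesis using IH atLeastAtMostSuc_conv[of 1 "max_letter w"] by simp
  qed
qed simp

lemma is_rgf_earlier_occurrence:
  assumes "is_rgf w" "p < length w" "0 < v" "v < w ! p"
  shows "\<exists>q < p. w ! q = v"
proof -
  have "w ! p \<le> Suc (max_letter (take p w))" using assms unfolding is_rgf_def by auto
  then have "v \<in> set (take p w)"
    using set_is_rgf[OF is_rgf_take[OF assms(1)], of p] assms by auto
  then show ?thesis using assms(2) by (auto simp: in_set_conv_nth)
qed

lemma is_rgf_nth_0: "is_rgf w \<Longrightarrow> w \<noteq> [] \<Longrightarrow> w ! 0 = 1"
  unfolding is_rgf_def
    by (metis One_nat_def Suc_leI le_antisym length_greater_0_conv max_letter_Nil take0)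

lemma max_letter_le_length: "is_rgf w \<Longrightarrow> max_letter w \<le> length w"
  using card_length[of w] set_is_rgf[of w] by simp

lemma finite_RGF: "finite (RGF n)"
proof (rule finite_subset)
  show "RGF n \<subseteq> {w. set w \<subseteq> {0..n} \<and> length w = n}"
    using max_letter_le_length max_letter_ge unfolding RGF_def by fastforce
qed (rule finite_lists_length_eq[of "{0..n}" n, simplified])

lemma RGF_pos: "w \<in> RGF n \<Longrightarrow> x \<in> set w \<Longrightarrow> 0 < x"
  unfolding RGF_def using set_is_rgf by fastforce

lemma snoc_in_RGF_Suc_iff:
  "u @ [x] \<in> RGF (Suc n) \<longleftrightarrow> u \<in> RGF n \<and> 0 < x \<and> x \<le> Suc (max_letter u)"
  unfolding RGF_def by (auto simp: is_rgf_snoc)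

lemma RGF_SucE:
  assumes "w \<in> RGF (Suc n)"
  obtains u x where "w = u @ [x]" "u \<in> RGF n" "0 < x" "x \<le> Suc (max_letter u)"
proof -
  have "length w = Suc n" using assms unfolding RGF_def by simp
  then obtain u x where "w = u @ [x]" using length_Suc_conv_rev[of w n] by blast
  then show thesis using that assms snoc_in_RGF_Suc_iff by blast
qed

lemma max_letter_RGF_Suc_pos: "u \<in> RGF (Suc n) \<Longrightarrow> 0 < max_letter u"
  using RGF_pos[of u] max_letter_in_set[of u] unfolding RGF_def by fastforce

lemma set_conv_nth_pred: "set w = (\<lambda>i. w ! (i - 1)) ` {1..length w}"
proof
  show "set w \<subseteq> (\<lambda>i. w ! (i - 1)) ` {1..length w}"
  proof
    fix x assume "x \<in> set w"
    then obtain k where "k < length w" "x = w ! k" by (auto simp: in_set_conv_nth)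
    then show "x \<in> (\<lambda>i. w ! (i - 1)) ` {1..length w}" by (intro image_eqI[of _ _ "Suc k"]) auto
  qed
qed auto

section \<open>The restricted growth function of a set partition\<close>

definition block_rank :: "nat set set \<Rightarrow> nat set \<Rightarrow> nat" where
  "block_rank \<sigma> B = card {C \<in> \<sigma>. Min C \<le> Min B}"

lemma block_of_eq:
  assumes "partition_on A \<sigma>" "B \<in> \<sigma>" "i \<in> B"
  shows "block_of \<sigma> i = B"
  unfolding block_of_def
proof (rule the_equality)
  show "B \<in> \<sigma> \<and> i \<in> B" using assms by simp
next
  fix C assume "C \<in> \<sigma> \<and> i \<in> C"
  then show "C = B" using disjointD[OF partition_onD2[OF assms(1)], of C B] assms by blast
qed

lemma block_of_mem:
  assumes "partition_on A \<sigma>" "i \<in> A"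
  shows "block_of \<sigma> i \<in> \<sigma>" "i \<in> block_of \<sigma> i"
proof -
  obtain B where "B \<in> \<sigma>" "i \<in> B" using partition_onD1[OF assms(1)] assms(2) by blast
  then show "block_of \<sigma> i \<in> \<sigma>" "i \<in> block_of \<sigma> i" using block_of_eq[OF assms(1)] by auto
qed

lemma partition_on_block:
  assumes "finite A" "partition_on A \<sigma>" "B \<in> \<sigma>"
  shows "finite B" "B \<noteq> {}" "B \<subseteq> A" "Min B \<in> B"
proof -
  show "B \<subseteq> A" using partition_onD1[OF assms(2)] assms(3) by blast
  then show "finite B" using assms(1) finite_subset by blast
  show "B \<noteq> {}" using partition_onD3[OF assms(2)] assms(3) by blast
  then show "Min B \<in> B" using \<open>finite B\<close> by simp
qed

lemma inj_on_Min_partition: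
  assumes "finite A" "partition_on A \<sigma>"
  shows "inj_on Min \<sigma>"
proof (rule inj_onI)
  fix B C assume B: "B \<in> \<sigma>" and C: "C \<in> \<sigma>" and "Min B = Min C"
  moreover have "Min B \<in> B" "Min C \<in> C" using partition_on_block(4)[OF assms] B C by auto
  ultimately have "Min B \<in> B \<inter> C" by simp
  then show "B = C" using disjointD[OF partition_onD2[OF assms(2)] B C] by blast
qed

lemma block_rank_eq_card_minima:
  assumes "finite A" "partition_on A \<sigma>"
  shows "block_rank \<sigma> B = card {x \<in> Min ` \<sigma>. x \<le> Min B}"
proof -
  have "{x \<in> Min ` \<sigma>. x \<le> Min B} = Min ` {C \<in> \<sigma>. Min C \<le> Min B}" by auto
  moreover have "inj_on Min {C \<in> \<sigma>. Min C \<le> Min B}"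
    using inj_on_Min_partition[OF assms] by (rule inj_on_subset) blast
  ultimately show ?thesis unfolding block_rank_def by (simp add: card_image)
qed

lemma block_rank_less:
  assumes "finite A" "partition_on A \<sigma>" "B \<in> \<sigma>" "C \<in> \<sigma>" "Min B < Min C"
  shows "block_rank \<sigma> B < block_rank \<sigma> C"
proof -
  have "{D \<in> \<sigma>. Min D \<le> Min B} \<subseteq> {D \<in> \<sigma>. Min D \<le> Min C}"
    using assms(5) by auto
  moreover have "C \<in> {D \<in> \<sigma>. Min D \<le> Min C} - {D \<in> \<sigma>. Min D \<le> Min B}"
    using assms(4,5) by auto
  ultimately have "{D \<in> \<sigma>. Min D \<le> Min B} \<subset> {D \<in> \<sigma>. Min D \<le> Min C}"
    by blast
  then show ?thesis
    unfolding block_rank_def using finite_elements[OF assms(1,2)] by (simp add: psubset_card_mono)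
qed

lemma inj_on_block_rank:
  assumes "finite A" "partition_on A \<sigma>"
  shows "inj_on (block_rank \<sigma>) \<sigma>"
proof (rule inj_onI)
  fix B C assume B: "B \<in> \<sigma>" and C: "C \<in> \<sigma>" and eq: "block_rank \<sigma> B = block_rank \<sigma> C"
  have "Min B = Min C"
    using block_rank_less[OF assms B C] block_rank_less[OF assms C B] eq
    by (cases "Min B" "Min C" rule: linorder_cases) auto
  then show "B = C" using inj_on_Min_partition[OF assms] B C by (auto dest: inj_onD)
qed

lemma rgf_eq_map:
  assumes "\<sigma> \<in> Pi_set n"
  shows "rgf \<sigma> = map (\<lambda>i. block_rank \<sigma> (block_of \<sigma> i)) [1..<Suc n]"
proof -
  have "\<Union>\<sigma> = {1..n}" using assms partition_onD1 unfolding Pi_set_def by blast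
  moreover have "{1..n} = {1..<Suc n}" by auto
  ultimately have "\<Union>\<sigma> = {1..<Suc n}" by simp
  then show ?thesis unfolding rgf_def block_rank_def by simp
qed

lemma length_rgf [simp]: "\<sigma> \<in> Pi_set n \<Longrightarrow> length (rgf \<sigma>) = n"
  by (simp add: rgf_eq_map)

lemma nth_rgf:
  assumes "\<sigma> \<in> Pi_set n" "i \<in> {1..n}"
  shows "rgf \<sigma> ! (i - 1) = block_rank \<sigma> (block_of \<sigma> i)"
proof -
  have "i - 1 < n" "[1..<Suc n] ! (i - 1) = i" using assms(2) by (auto simp del: upt_Suc)
  then show ?thesis using assms(1) by (simp add: rgf_eq_map del: upt_Suc)
qed

definition positions :: "nat list \<Rightarrow> nat \<Rightarrow> nat set" where
  "positions w v = {i \<in> {1..length w}. w ! (i - 1) = v}"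

definition rgf_blocks :: "nat list \<Rightarrow> nat set set" where
  "rgf_blocks w = positions w ` set w"

lemma block_of_eq_positions:
  assumes \<sigma>: "\<sigma> \<in> Pi_set n" and i: "i \<in> {1..n}"
  shows "block_of \<sigma> i = positions (rgf \<sigma>) (rgf \<sigma> ! (i - 1))"
proof (intro set_eqI iffI)
  have P: "partition_on {1..n} \<sigma>" using \<sigma> unfolding Pi_set_def by simp
  have Bi: "block_of \<sigma> i \<in> \<sigma>" using block_of_mem(1)[OF P i] .
  {
    fix j assume j: "j \<in> block_of \<sigma> i"
    then have j': "j \<in> {1..n}" using partition_on_block(3)[OF _ P Bi] by blast
    have "block_of \<sigma> j = block_of \<sigma> i" using block_of_eq[OF P Bi j] .
    then show "j \<in> positions (rgf \<sigma>) (rgf \<sigma> ! (i - 1))"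
      using nth_rgf[OF \<sigma> j'] nth_rgf[OF \<sigma> i] j' \<sigma> unfolding positions_def by simp
  next
    fix j assume "j \<in> positions (rgf \<sigma>) (rgf \<sigma> ! (i - 1))"
    then have j': "j \<in> {1..n}" and "block_rank \<sigma> (block_of \<sigma> j) = block_rank \<sigma> (block_of \<sigma> i)"
      using nth_rgf[OF \<sigma> i] nth_rgf[OF \<sigma>, of j] \<sigma> unfolding positions_def by auto
    then have "block_of \<sigma> j = block_of \<sigma> i"
      using inj_onD[OF inj_on_block_rank[OF _ P] _ block_of_mem(1)[OF P j'] Bi] by simp
    then show "j \<in> block_of \<sigma> i" using block_of_mem(2)[OF P j'] by simp
  }
qed

lemma rgf_blocks_rgf:
  assumes \<sigma>: "\<sigma> \<in> Pi_set n"
  shows "rgf_blocks (rgf \<sigma>) = \<sigma>"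
proof -
  have P: "partition_on {1..n} \<sigma>" using \<sigma> unfolding Pi_set_def by simp
  have "rgf_blocks (rgf \<sigma>) = (\<lambda>i. positions (rgf \<sigma>) (rgf \<sigma> ! (i - 1))) ` {1..n}"
    unfolding rgf_blocks_def set_conv_nth_pred[of "rgf \<sigma>"] using \<sigma> by (simp add: image_image)
  also have "\<dots> = block_of \<sigma> ` {1..n}"
    using block_of_eq_positions[OF \<sigma>] by simp
  also have "\<dots> = \<sigma>"
  proof
    show "block_of \<sigma> ` {1..n} \<subseteq> \<sigma>" using block_of_mem(1)[OF P] by blast
    show "\<sigma> \<subseteq> block_of \<sigma> ` {1..n}"
    proof
      fix B assume B: "B \<in> \<sigma>"
      then have "Min B \<in> B" "B \<subseteq> {1..n}" using partition_on_block[OF _ P] by auto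
      then show "B \<in> block_of \<sigma> ` {1..n}" using block_of_eq[OF P B] by (metis image_eqI subsetD)
    qed
  qed
  finally show ?thesis .
qed

lemma nth_rgf_Min:
  assumes \<sigma>: "\<sigma> \<in> Pi_set n" and C: "C \<in> \<sigma>"
  shows "Min C \<in> {1..n}" "rgf \<sigma> ! (Min C - 1) = card {x \<in> Min ` \<sigma>. x \<le> Min C}"
proof -
  have P: "partition_on {1..n} \<sigma>" using \<sigma> unfolding Pi_set_def by simp
  show C1: "Min C \<in> {1..n}" using partition_on_block(3,4)[OF _ P C] by blast
  have "block_of \<sigma> (Min C) = C" using block_of_eq[OF P C partition_on_block(4)[OF _ P C]] by simp
  then show "rgf \<sigma> ! (Min C - 1) = card {x \<in> Min ` \<sigma>. x \<le> Min C}"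
    using nth_rgf[OF \<sigma> C1] block_rank_eq_card_minima[OF _ P] by simp
qed

text \<open>The number of blocks whose minimum lies in \<open>{1..i}\<close> is the value of \<open>rgf \<sigma>\<close> at the
  largest such minimum, a position among the first \<open>i\<close>.\<close>

lemma card_minima_mem_rgf_prefix:
  assumes \<sigma>: "\<sigma> \<in> Pi_set n" and i: "i \<le> n" and ne: "{x \<in> Min ` \<sigma>. x \<le> i} \<noteq> {}"
  shows "card {x \<in> Min ` \<sigma>. x \<le> i} \<in> set (take i (rgf \<sigma>))"
proof -
  have P: "partition_on {1..n} \<sigma>" using \<sigma> unfolding Pi_set_def by simp
  define K where "K = {x \<in> Min ` \<sigma>. x \<le> i}"
  have "finite K" using finite_elements[OF _ P] unfolding K_def by simp
  moreover have "K \<noteq> {}" using ne unfolding K_def .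
  ultimately have "Max K \<in> K" by (rule Max_in)
  then obtain C where C: "C \<in> \<sigma>" "Max K = Min C" "Min C \<le> i" unfolding K_def by auto
  have "x \<le> Min C" if "x \<in> K" for x using Max_ge[OF \<open>finite K\<close> that] C(2) by simp
  then have "{x \<in> Min ` \<sigma>. x \<le> Min C} = K" using C(3) unfolding K_def by auto
  then have val: "rgf \<sigma> ! (Min C - 1) = card K" using nth_rgf_Min[OF \<sigma> C(1)] by simp
  have "Min C - 1 < i" using C(3) nth_rgf_Min(1)[OF \<sigma> C(1)] by auto
  then have "take i (rgf \<sigma>) ! (Min C - 1) \<in> set (take i (rgf \<sigma>))" using i \<sigma> by (intro nth_mem) simp
  then show ?thesis using val \<open>Min C - 1 < i\<close> unfolding K_def by simp
qed

lemma is_rgf_rgf: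
  assumes \<sigma>: "\<sigma> \<in> Pi_set n"
  shows "is_rgf (rgf \<sigma>)"
  unfolding is_rgf_def
proof (intro allI impI)
  fix i assume "i < length (rgf \<sigma>)"
  then have i: "i < n" "Suc i \<in> {1..n}" using \<sigma> by auto
  have P: "partition_on {1..n} \<sigma>" using \<sigma> unfolding Pi_set_def by simp
  define B where "B = block_of \<sigma> (Suc i)"
  have B: "B \<in> \<sigma>" "Suc i \<in> B" using block_of_mem[OF P i(2)] unfolding B_def by auto
  have "Min B \<le> Suc i" using B partition_on_block(1)[OF _ P B(1)] by simp
  define M where "M = Min ` \<sigma>"
  have fin: "finite M" using finite_elements[OF _ P] unfolding M_def by simp
  have val: "rgf \<sigma> ! i = card {x \<in> M. x \<le> Min B}"
    using nth_rgf[OF \<sigma> i(2)] block_rank_eq_card_minima[OF _ P] unfolding B_def M_def by simp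
  have "Min B \<in> {x \<in> M. x \<le> Min B}" using B(1) unfolding M_def by simp
  then have pos: "0 < rgf \<sigma> ! i" using val fin by (auto simp: card_gt_0_iff)
  have "{x \<in> M. x \<le> Min B} \<subseteq> insert (Suc i) {x \<in> M. x \<le> i}" using \<open>Min B \<le> Suc i\<close> by auto
  then have "rgf \<sigma> ! i \<le> card (insert (Suc i) {x \<in> M. x \<le> i})"
    unfolding val by (rule card_mono[rotated]) (use fin in simp)
  also have "\<dots> \<le> Suc (card {x \<in> M. x \<le> i})" using fin by (simp add: card_insert_if)
  finally have "rgf \<sigma> ! i \<le> Suc (card {x \<in> M. x \<le> i})" .
  moreover have "card {x \<in> M. x \<le> i} \<le> max_letter (take i (rgf \<sigma>))"
  proof (cases "{x \<in> M. x \<le> i} = {}")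
    case False
    then show ?thesis
      using card_minima_mem_rgf_prefix[OF \<sigma>, of i] i max_letter_ge unfolding M_def by simp
  next
    case True
    show ?thesis unfolding True by simp
  qed
  ultimately show "0 < rgf \<sigma> ! i \<and> rgf \<sigma> ! i \<le> Suc (max_letter (take i (rgf \<sigma>)))"
    using pos by simp
qed

lemma rgf_in_RGF: "\<sigma> \<in> Pi_set n \<Longrightarrow> rgf \<sigma> \<in> RGF n"
  using is_rgf_rgf unfolding RGF_def by simp

lemma positions_nonempty: "v \<in> set w \<Longrightarrow> positions w v \<noteq> {}"
  unfolding positions_def set_conv_nth_pred[of w] by auto

lemma finite_positions [simp]: "finite (positions w v)"
  by (simp add: positions_def)

lemma partition_on_rgf_blocks: "partition_on {1..length w} (rgf_blocks w)"
proof (rule partition_onI)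
  show "\<Union>(rgf_blocks w) = {1..length w}"
    unfolding rgf_blocks_def positions_def set_conv_nth_pred[of w] by auto
  show "{} \<notin> rgf_blocks w" using positions_nonempty unfolding rgf_blocks_def by auto
  show "disjnt p q" if "p \<in> rgf_blocks w" "q \<in> rgf_blocks w" "p \<noteq> q" for p q
    using that unfolding rgf_blocks_def positions_def disjnt_def by auto
qed

lemma Min_positions_less:
  assumes R: "is_rgf w" and u: "u \<in> set w" and v: "v \<in> set w" and "u < v"
  shows "Min (positions w u) < Min (positions w v)"
proof -
  define p where "p = Min (positions w v)"
  have "p \<in> positions w v" using positions_nonempty[OF v] unfolding p_def by simp
  then have p: "p \<in> {1..length w}" "w ! (p - 1) = v" unfolding positions_def by auto
  have "0 < u" using set_is_rgf[OF R] u by simp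
  moreover have "p - 1 < length w" using p(1) by auto
  ultimately obtain q where q: "q < p - 1" "w ! q = u"
    using is_rgf_earlier_occurrence[OF R, of "p - 1" u] p(2) \<open>u < v\<close> by blast
  then have "Suc q \<in> positions w u" unfolding positions_def using p by auto
  then have "Min (positions w u) \<le> Suc q" by simp
  then show ?thesis using q unfolding p_def by simp
qed

lemma rgf_rgf_blocks:
  assumes w: "w \<in> RGF n"
  shows "rgf (rgf_blocks w) = w"
proof -
  have L: "length w = n" and R: "is_rgf w" using w unfolding RGF_def by auto
  define \<sigma> where "\<sigma> = rgf_blocks w"
  have \<sigma>: "\<sigma> \<in> Pi_set n" using partition_on_rgf_blocks[of w] L unfolding Pi_set_def \<sigma>_def by simp
  have inj: "inj_on (positions w) (set w)"
    by (rule inj_onI) (use positions_nonempty in \<open>fastforce simp: positions_def\<close>)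
  have Min_le_iff: "Min (positions w u) \<le> Min (positions w v) \<longleftrightarrow> u \<le> v"
    if "u \<in> set w" "v \<in> set w" for u v
    using Min_positions_less[OF R that] Min_positions_less[OF R that(2,1)]
    by (cases u v rule: linorder_cases) auto
  have rank: "block_rank \<sigma> (positions w v) = v" if v: "v \<in> set w" for v
  proof -
    have "{C \<in> \<sigma>. Min C \<le> Min (positions w v)} = positions w ` {u \<in> set w. u \<le> v}"
      unfolding \<sigma>_def rgf_blocks_def using Min_le_iff[OF _ v] by auto
    also have "{u \<in> set w. u \<le> v} = {1..v}"
      using set_is_rgf[OF R] max_letter_ge[OF v] by auto
    finally show ?thesis
      unfolding block_rank_def using inj set_is_rgf[OF R] max_letter_ge[OF v]
      by (simp add: card_image inj_on_subset)
  qed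
  have "rgf \<sigma> = w"
  proof (rule nth_equalityI)
    show "length (rgf \<sigma>) = length w" using \<sigma> L by simp
    fix i assume "i < length (rgf \<sigma>)"
    then have i: "Suc i \<in> {1..n}" using \<sigma> by simp
    have "positions w (w ! i) \<in> \<sigma>" "Suc i \<in> positions w (w ! i)"
      using i L unfolding \<sigma>_def rgf_blocks_def positions_def by auto
    then have "block_of \<sigma> (Suc i) = positions w (w ! i)"
      using block_of_eq \<sigma> unfolding Pi_set_def by blast
    then show "rgf \<sigma> ! i = w ! i" using nth_rgf[OF \<sigma> i] rank[of "w ! i"] i L by simp
  qed
  then show ?thesis unfolding \<sigma>_def .
qed

lemma bij_betw_rgf: "bij_betw rgf (Pi_set n) (RGF n)"
proof (rule bij_betw_byWitness[where f' = rgf_blocks])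
  show "\<forall>\<sigma>\<in>Pi_set n. rgf_blocks (rgf \<sigma>) = \<sigma>" using rgf_blocks_rgf by blast
  show "\<forall>w\<in>RGF n. rgf (rgf_blocks w) = w" using rgf_rgf_blocks by blast
  show "rgf ` Pi_set n \<subseteq> RGF n" using rgf_in_RGF by blast
  show "rgf_blocks ` RGF n \<subseteq> Pi_set n"
    using partition_on_rgf_blocks unfolding Pi_set_def RGF_def by auto
qed

section \<open>Pattern containment\<close>

lemma contains_iff_subseq: "contains w p \<longleftrightarrow> (\<exists>s. subseq s w \<and> standardize s = p)"
  unfolding contains_def subseq_conv_nths by metis

lemma length_standardize [simp]: "length (standardize s) = length s"
  by (simp add: standardize_def)

lemma subseq_Cons_iff_nth:
  "subseq (x # s) w \<longleftrightarrow> (\<exists>i < length w. w ! i = x \<and> subseq s (drop (Suc i) w))"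
proof
  assume "subseq (x # s) w"
  then obtain us vs where "w = us @ x # vs" "subseq s vs" using list_emb_ConsD by fastforce
  then show "\<exists>i < length w. w ! i = x \<and> subseq s (drop (Suc i) w)"
    by (intro exI[of _ "length us"]) auto
next
  assume "\<exists>i < length w. w ! i = x \<and> subseq s (drop (Suc i) w)"
  then obtain i where i: "i < length w" "w ! i = x" "subseq s (drop (Suc i) w)" by blast
  have "w = take i w @ (w ! i # drop (Suc i) w)" using id_take_nth_drop[OF i(1)] .
  then show "subseq (x # s) w" using i(2,3) by (metis subseq_Cons2 subseq_drop_many)
qed

lemma subseq3_iff_nth:
  "subseq [a, b, c] w \<longleftrightarrow>
    (\<exists>i j k. i < j \<and> j < k \<and> k < length w \<and> w ! i = a \<and> w ! j = b \<and> w ! k = c)"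
proof
  assume "subseq [a, b, c] w"
  then obtain i where i: "i < length w" "w ! i = a" "subseq [b, c] (drop (Suc i) w)"
    using subseq_Cons_iff_nth[of a "[b, c]" w] by blast
  then obtain j where j: "j < length w - Suc i" "w ! (Suc i + j) = b"
    "subseq [c] (drop (Suc (Suc i + j)) w)"
    using subseq_Cons_iff_nth[of b "[c]"] by (auto simp: ac_simps)
  then obtain k where k: "k < length w - Suc (Suc i + j)" "w ! (Suc (Suc i + j) + k) = c"
    using subseq_Cons_iff_nth[of c "[]"] by auto
  show "\<exists>i j k. i < j \<and> j < k \<and> k < length w \<and> w ! i = a \<and> w ! j = b \<and> w ! k = c"
    using i j k by (intro exI[of _ i] exI[of _ "Suc i + j"] exI[of _ "Suc (Suc i + j) + k"]) simp
next
  assume "\<exists>i j k. i < j \<and> j < k \<and> k < length w \<and> w ! i = a \<and> w ! j = b \<and> w ! k = c"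
  then obtain i j k where ijk: "i < j" "j < k" "k < length w" "w ! i = a" "w ! j = b" "w ! k = c"
    by blast
  have "subseq [c] (drop (Suc j) w)"
    using ijk by (auto simp: subseq_singleton_left in_set_conv_nth intro!: exI[of _ "k - Suc j"])
  then have "subseq [b, c] (drop (Suc i) w)"
    using ijk subseq_Cons_iff_nth[of b "[c]" "drop (Suc i) w"]
    by (auto intro!: exI[of _ "j - Suc i"])
  then show "subseq [a, b, c] w" using ijk subseq_Cons_iff_nth[of a "[b, c]" w] by auto
qed

definition has_triple :: "(nat \<Rightarrow> nat \<Rightarrow> nat \<Rightarrow> bool) \<Rightarrow> nat list \<Rightarrow> bool" where
  "has_triple P w \<longleftrightarrow> (\<exists>i j k. i < j \<and> j < k \<and> k < length w \<and> P (w ! i) (w ! j) (w ! k))"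

lemma has_triple_iff_subseq: "has_triple P w \<longleftrightarrow> (\<exists>a b c. subseq [a, b, c] w \<and> P a b c)"
  unfolding has_triple_def subseq3_iff_nth by blast

lemma contains_length3_iff:
  assumes "length p = 3"
  shows "contains w p \<longleftrightarrow> has_triple (\<lambda>a b c. standardize [a, b, c] = p) w"
proof -
  have "(\<exists>s. subseq s w \<and> standardize s = p) \<longleftrightarrow>
        (\<exists>a b c. subseq [a, b, c] w \<and> standardize [a, b, c] = p)"
  proof
    assume "\<exists>s. subseq s w \<and> standardize s = p"
    then obtain s where s: "subseq s w" "standardize s = p" by blast
    then have "length s = 3" using assms length_standardize by metis
    then obtain a b c where "s = [a, b, c]" by (auto simp: numeral_3_eq_3 length_Suc_conv)
    then show "\<exists>a b c. subseq [a, b, c] w \<and> standardize [a, b, c] = p" using s by blast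
  qed blast
  then show ?thesis unfolding contains_iff_subseq has_triple_iff_subseq .
qed

lemma Collect_insert_if:
  "{t \<in> insert a A. P t} = (if P a then insert a {t \<in> A. P t} else {t \<in> A. P t})"
  by auto

lemma standardize_3:
  "standardize [x, y, z] =
    [card {t \<in> {x, y, z}. t \<le> x}, card {t \<in> {x, y, z}. t \<le> y}, card {t \<in> {x, y, z}. t \<le> z}]"
  by (simp add: standardize_def)

lemma standardize_eq_112_iff: "standardize [x, y, z :: nat] = [1, 1, 2] \<longleftrightarrow> x = y \<and> y < z"
  unfolding standardize_3 Collect_insert_if
  by (cases x y rule: linorder_cases; cases y z rule: linorder_cases;
      cases x z rule: linorder_cases)
     (simp_all add: Collect_insert_if card_insert_if)

lemma standardize_eq_121_iff: "standardize [x, y, z :: nat] = [1, 2, 1] \<longleftrightarrow> x = z \<and> x < y"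
  unfolding standardize_3 Collect_insert_if
  by (cases x y rule: linorder_cases; cases y z rule: linorder_cases;
      cases x z rule: linorder_cases)
     (simp_all add: Collect_insert_if card_insert_if)

lemma standardize_eq_122_iff: "standardize [x, y, z :: nat] = [1, 2, 2] \<longleftrightarrow> y = z \<and> x < y"
  unfolding standardize_3 Collect_insert_if
  by (cases x y rule: linorder_cases; cases y z rule: linorder_cases;
      cases x z rule: linorder_cases)
     (simp_all add: Collect_insert_if card_insert_if)

lemma contains_112_iff: "contains w [1, 1, 2] \<longleftrightarrow> has_triple (\<lambda>x y z. x = y \<and> y < z) w"
proof -
  have len: "length [1, 1, 2 :: nat] = 3" by simp
  show ?thesis unfolding contains_length3_iff[OF len] standardize_eq_112_iff ..
qed

lemma contains_121_iff: "contains w [1, 2, 1] \<longleftrightarrow> has_triple (\<lambda>x y z. x = z \<and> x < y) w"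
proof -
  have len: "length [1, 2, 1 :: nat] = 3" by simp
  show ?thesis unfolding contains_length3_iff[OF len] standardize_eq_121_iff ..
qed

lemma contains_122_iff: "contains w [1, 2, 2] \<longleftrightarrow> has_triple (\<lambda>x y z. y = z \<and> x < y) w"
proof -
  have len: "length [1, 2, 2 :: nat] = 3" by simp
  show ?thesis unfolding contains_length3_iff[OF len] standardize_eq_122_iff ..
qed

lemma has_triple_snoc:
  "has_triple P (u @ [x]) \<longleftrightarrow>
    has_triple P u \<or> (\<exists>i j. i < j \<and> j < length u \<and> P (u ! i) (u ! j) x)"
proof
  assume "has_triple P (u @ [x])"
  then obtain i j k where ijk: "i < j" "j < k" "k < Suc (length u)"
    "P ((u @ [x]) ! i) ((u @ [x]) ! j) ((u @ [x]) ! k)"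
    unfolding has_triple_def by auto
  show "has_triple P u \<or> (\<exists>i j. i < j \<and> j < length u \<and> P (u ! i) (u ! j) x)"
  proof (cases "k < length u")
    case True
    then have "P (u ! i) (u ! j) (u ! k)" using ijk by (simp add: nth_append)
    then show ?thesis using ijk True unfolding has_triple_def by blast
  next
    case False
    then have "k = length u" using ijk by simp
    then have "P (u ! i) (u ! j) x" using ijk by (simp add: nth_append)
    then show ?thesis using ijk \<open>k = length u\<close> by blast
  qed
next
  assume "has_triple P u \<or> (\<exists>i j. i < j \<and> j < length u \<and> P (u ! i) (u ! j) x)"
  then show "has_triple P (u @ [x])"
  proof
    assume "has_triple P u"
    then obtain i j k where "i < j" "j < k" "k < length u" "P (u ! i) (u ! j) (u ! k)"
      unfolding has_triple_def by blast
    then show ?thesis unfolding has_triple_def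
      by (intro exI[of _ i] exI[of _ j] exI[of _ k]) (simp add: nth_append)
  next
    assume "\<exists>i j. i < j \<and> j < length u \<and> P (u ! i) (u ! j) x"
    then obtain i j where "i < j" "j < length u" "P (u ! i) (u ! j) x" by blast
    then show ?thesis unfolding has_triple_def
      by (intro exI[of _ i] exI[of _ j] exI[of _ "length u"]) (simp add: nth_append)
  qed
qed

lemma has_triple_Cons:
  "has_triple P (x # v) \<longleftrightarrow>
    has_triple P v \<or> (\<exists>j k. j < k \<and> k < length v \<and> P x (v ! j) (v ! k))"
proof
  assume "has_triple P (x # v)"
  then obtain i j k where ijk: "i < j" "j < k" "k < Suc (length v)"
    "P ((x # v) ! i) ((x # v) ! j) ((x # v) ! k)"
    unfolding has_triple_def by auto
  obtain j' where j': "j = Suc j'" using ijk by (cases j) auto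
  obtain k' where k': "k = Suc k'" using ijk by (cases k) auto
  show "has_triple P v \<or> (\<exists>j k. j < k \<and> k < length v \<and> P x (v ! j) (v ! k))"
  proof (cases i)
    case 0
    then have "P x (v ! j') (v ! k')" using ijk j' k' by simp
    then show ?thesis using ijk j' k' by auto
  next
    case (Suc i')
    then have "P (v ! i') (v ! j') (v ! k')" using ijk j' k' by simp
    then show ?thesis using ijk j' k' Suc unfolding has_triple_def by auto
  qed
next
  assume "has_triple P v \<or> (\<exists>j k. j < k \<and> k < length v \<and> P x (v ! j) (v ! k))"
  then show "has_triple P (x # v)"
  proof
    assume "has_triple P v"
    then obtain i j k where "i < j" "j < k" "k < length v" "P (v ! i) (v ! j) (v ! k)"
      unfolding has_triple_def by blast
    then show ?thesis unfolding has_triple_def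
      by (intro exI[of _ "Suc i"] exI[of _ "Suc j"] exI[of _ "Suc k"]) simp
  next
    assume "\<exists>j k. j < k \<and> k < length v \<and> P x (v ! j) (v ! k)"
    then obtain j k where "j < k" "k < length v" "P x (v ! j) (v ! k)" by blast
    then show ?thesis unfolding has_triple_def
      by (intro exI[of _ 0] exI[of _ "Suc j"] exI[of _ "Suc k"]) simp
  qed
qed

lemma has_triple_map: "has_triple P (map f u) \<longleftrightarrow> has_triple (\<lambda>a b c. P (f a) (f b) (f c)) u"
proof
  assume "has_triple P (map f u)"
  then obtain i j k where "i < j" "j < k" "k < length u"
    "P (map f u ! i) (map f u ! j) (map f u ! k)"
    unfolding has_triple_def by auto
  then show "has_triple (\<lambda>a b c. P (f a) (f b) (f c)) u" unfolding has_triple_def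
    by (intro exI[of _ i] exI[of _ j] exI[of _ k]) simp
next
  assume "has_triple (\<lambda>a b c. P (f a) (f b) (f c)) u"
  then obtain i j k where "i < j" "j < k" "k < length u" "P (f (u ! i)) (f (u ! j)) (f (u ! k))"
    unfolding has_triple_def by auto
  then show "has_triple P (map f u)" unfolding has_triple_def
    by (intro exI[of _ i] exI[of _ j] exI[of _ k]) simp
qed

definition RGF_avoiding :: "nat list \<Rightarrow> nat \<Rightarrow> nat list set" where
  "RGF_avoiding p n = {w \<in> RGF n. \<not> contains w p}"

lemma card_R_avoid: "card (R_avoid n \<pi>) = card (RGF_avoiding (rgf \<pi>) n)"
proof (rule bij_betw_same_card[OF bij_betw_subset[OF bij_betw_rgf]])
  show "R_avoid n \<pi> \<subseteq> Pi_set n" unfolding R_avoid_def by blast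
  have surj: "rgf ` Pi_set n = RGF n" using bij_betw_imp_surj_on[OF bij_betw_rgf] .
  show "rgf ` R_avoid n \<pi> = RGF_avoiding (rgf \<pi>) n"
  proof (intro set_eqI iffI)
    fix w assume "w \<in> rgf ` R_avoid n \<pi>"
    then show "w \<in> RGF_avoiding (rgf \<pi>) n"
      using rgf_in_RGF unfolding R_avoid_def RGF_avoiding_def by auto
  next
    fix w assume w: "w \<in> RGF_avoiding (rgf \<pi>) n"
    then obtain \<sigma> where "\<sigma> \<in> Pi_set n" "w = rgf \<sigma>"
      using surj unfolding RGF_avoiding_def by (metis (no_types, lifting) imageE mem_Collect_eq)
    then show "w \<in> rgf ` R_avoid n \<pi>" using w unfolding R_avoid_def RGF_avoiding_def by auto
  qed
qed

section \<open>P-recursive sequences\<close>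

text \<open>\<open>shift_apply q f\<close> is \<open>q(E) f\<close> for the shift operator \<open>(E f) n = f (n + 1)\<close>.\<close>

definition shift_apply :: "rat poly \<Rightarrow> (nat \<Rightarrow> rat) \<Rightarrow> nat \<Rightarrow> rat" where
  "shift_apply q f n = (\<Sum>i\<le>degree q. coeff q i * f (n + i))"

lemma shift_apply_eq_sum:
  assumes "degree q \<le> N"
  shows "shift_apply q f n = (\<Sum>i\<le>N. coeff q i * f (n + i))"
  unfolding shift_apply_def
proof (rule sum.mono_neutral_left)
  show "finite {..N}" by simp
  show "{..degree q} \<subseteq> {..N}" using assms by auto
  show "\<forall>i\<in>{..N} - {..degree q}. coeff q i * f (n + i) = 0" by (auto simp: coeff_eq_0)
qed

lemma shift_apply_add: "shift_apply (p + q) f n = shift_apply p f n + shift_apply q f n"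
proof -
  let ?N = "max (degree p) (degree q)"
  have "degree (p + q) \<le> ?N" by (rule degree_add_le_max)
  then have "shift_apply (p + q) f n = (\<Sum>i\<le>?N. coeff (p + q) i * f (n + i))"
    by (rule shift_apply_eq_sum)
  also have "\<dots> = (\<Sum>i\<le>?N. coeff p i * f (n + i)) + (\<Sum>i\<le>?N. coeff q i * f (n + i))"
    by (simp add: distrib_right sum.distrib)
  also have "\<dots> = shift_apply p f n + shift_apply q f n"
    using shift_apply_eq_sum[of p ?N] shift_apply_eq_sum[of q ?N] by simp
  finally show ?thesis .
qed

lemma shift_apply_smult: "shift_apply (smult a q) f n = a * shift_apply q f n"
proof -
  have "shift_apply (smult a q) f n = (\<Sum>i\<le>degree q. coeff (smult a q) i * f (n + i))"
    by (rule shift_apply_eq_sum[OF degree_smult_le])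
  also have "\<dots> = a * shift_apply q f n" unfolding shift_apply_def
    by (simp add: sum_distrib_left mult.assoc)
  finally show ?thesis .
qed

lemma shift_apply_0[simp]: "shift_apply 0 f n = 0" unfolding shift_apply_def by simp

lemma shift_apply_pCons: "shift_apply (pCons a p) f n = a * f n + shift_apply p f (Suc n)"
proof -
  have "degree (pCons a p) \<le> Suc (degree p)" by (simp add: degree_pCons_le)
  then have "shift_apply (pCons a p) f n = (\<Sum>i\<le>Suc (degree p). coeff (pCons a p) i * f (n + i))"
    by (rule shift_apply_eq_sum)
  also have "\<dots> = (\<Sum>i\<le>degree p. coeff (pCons a p) (Suc i) * f (n + Suc i)) +
                   coeff (pCons a p) 0 * f (n + 0)"
    by (rule sum.atMost_Suc_shift[THEN trans]) simp
  also have "\<dots> = a * f n + shift_apply p f (Suc n)" unfolding shift_apply_def by simp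
  finally show ?thesis .
qed

lemma shift_apply_mult: "shift_apply (p * q) f n = shift_apply p (shift_apply q f) n"
proof (induction p arbitrary: n)
  case 0
  then show ?case by simp
next
  case (pCons a p)
  have "shift_apply (pCons a p * q) f n = shift_apply (smult a q + pCons 0 (p * q)) f n" by simp
  also have "\<dots> = a * shift_apply q f n + shift_apply (p * q) f (Suc n)"
    by (simp add: shift_apply_add shift_apply_smult shift_apply_pCons)
  also have "\<dots> = a * shift_apply q f n + shift_apply p (shift_apply q f) (Suc n)" using pCons.IH
    by simp
  also have "\<dots> = shift_apply (pCons a p) (shift_apply q f) n" by (simp add: shift_apply_pCons)
  finally show ?case .
qed

lemma shift_apply_1: "shift_apply 1 f n = f n"
  using shift_apply_pCons[of 1 0 f n] by (simp add: one_pCons)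

lemma shift_apply_linear: "shift_apply [:- of_nat j, 1:] f n = f (Suc n) - of_nat j * f n"
  by (simp add: shift_apply_pCons shift_apply_1[unfolded one_pCons])

lemma shift_apply_sum:
  "finite K \<Longrightarrow> shift_apply q (\<lambda>n. \<Sum>k\<in>K. F k n) n = (\<Sum>k\<in>K. shift_apply q (F k) n)"
  unfolding shift_apply_def by (simp add: sum_distrib_left sum.swap[of _ K])

text \<open>Multiplying by \<open>n\<close> turns an annihilator valid for \<open>n \<ge> 1\<close> into a recurrence valid
  for all \<open>n\<close>.\<close>

lemma P_recursiveI_shift_apply:
  assumes q: "q \<noteq> 0" and h: "\<And>n. n \<ge> 1 \<Longrightarrow> shift_apply q (\<lambda>n. of_nat (a n)) n = 0"
  shows "P_recursive a"
  unfolding P_recursive_def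
proof (rule exI[of _ "degree q"], rule exI[of _ "\<lambda>i. [:0, coeff q i:]"], intro conjI allI)
  let ?P = "\<lambda>i. [:0, coeff q i:]"
  show "\<exists>i\<le>degree q. ?P i \<noteq> 0"
    using q by (intro exI[of _ "degree q"]) simp
  fix n
  have "(\<Sum>i\<le>degree q. poly (?P i) (of_nat n) * of_nat (a (n + i))) =
        of_nat n * shift_apply q (\<lambda>n. of_nat (a n)) n"
    unfolding shift_apply_def by (simp add: sum_distrib_left mult.assoc mult.left_commute)
  also have "\<dots> = 0" using h[of n] by (cases n) auto
  finally show "(\<Sum>i\<le>degree q. poly (?P i) (of_nat n) * of_nat (a (n + i))) = 0" .
qed

lemma P_recursive_doubling:
  assumes "\<And>n. a (Suc (Suc n)) = 2 * a (Suc n)"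
  shows "P_recursive a"
proof (rule P_recursiveI_shift_apply[of "[:0, -2, 1:]"])
  show "[:0, -2, 1:] \<noteq> (0::rat poly)" by simp
  fix n :: nat assume "n \<ge> 1"
  have "shift_apply [:0, -2, 1:] (\<lambda>n. of_nat (a n)) n =
        - 2 * of_nat (a (Suc n)) + of_nat (a (Suc (Suc n)))"
    by (simp add: shift_apply_pCons)
  also have "\<dots> = 0" using assms[of n] by simp
  finally show "shift_apply [:0, -2, 1:] (\<lambda>n. of_nat (a n)) n = 0" .
qed

lemma P_recursiveI_recurrence:
  fixes Q :: "nat \<Rightarrow> rat poly"
  assumes "\<And>n. of_nat (a (n + k)) = (\<Sum>i < k. poly (Q i) (of_nat n) * of_nat (a (n + i)))"
  shows "P_recursive a"
  unfolding P_recursive_def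
proof (rule exI[of _ k], rule exI[of _ "\<lambda>i. if i = k then 1 else - Q i"], intro conjI allI)
  let ?P = "\<lambda>i. if i = k then 1 else - Q i"
  show "\<exists>i\<le>k. ?P i \<noteq> 0" by (intro exI[of _ k]) simp
  fix n
  have "(\<Sum>i\<le>k. poly (?P i) (of_nat n) * of_nat (a (n + i))) =
      (\<Sum>i < k. poly (?P i) (of_nat n) * of_nat (a (n + i))) + of_nat (a (n + k))"
    by (simp add: lessThan_Suc_atMost[symmetric])
  also have "(\<Sum>i < k. poly (?P i) (of_nat n) * of_nat (a (n + i))) =
      - (\<Sum>i < k. poly (Q i) (of_nat n) * of_nat (a (n + i)))"
    by (simp add: sum_negf[symmetric])
  finally show "(\<Sum>i\<le>k. poly (?P i) (of_nat n) * of_nat (a (n + i))) = 0" using assms[of n] by simp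
qed

section \<open>Avoiding \<open>1 2 \<dots> m\<close>\<close>

lemma standardize_upt: "standardize [1..<Suc m] = [1..<Suc m]"
proof (rule nth_equalityI)
  fix i assume "i < length (standardize [1..<Suc m])"
  then have i: "i < m" by (simp del: upt_Suc)
  have "{y \<in> set [1..<Suc m]. y \<le> [1..<Suc m] ! i} = {1..Suc i}"
    using i by (auto simp del: upt_Suc)
  then show "standardize [1..<Suc m] ! i = [1..<Suc m] ! i"
    unfolding standardize_def using i by (simp del: upt_Suc)
qed (simp del: upt_Suc)

lemma subseq_upt_rgf: "is_rgf w \<Longrightarrow> k \<le> max_letter w \<Longrightarrow> subseq [1..<Suc k] w"
proof (induction w arbitrary: k rule: rev_induct)
  case (snoc x w)
  then have R: "is_rgf w" "0 < x" "x \<le> Suc (max_letter w)" by (auto simp: is_rgf_snoc)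
  show ?case
  proof (cases "k \<le> max_letter w")
    case True
    then show ?thesis using snoc.IH[OF R(1)] by (simp add: subseq_rev_drop_many)
  next
    case False
    then have k: "k = Suc (max_letter w)" "x = k" using snoc.prems R by auto
    have "subseq [1..<Suc (max_letter w)] w" using snoc.IH[OF R(1)] by simp
    then show ?thesis using k by (simp add: list_emb_append_mono)
  qed
qed simp

lemma contains_upt_iff:
  assumes R: "is_rgf w"
  shows "contains w [1..<Suc m] \<longleftrightarrow> m \<le> max_letter w"
proof
  assume "contains w [1..<Suc m]"
  then obtain s where s: "subseq s w" "standardize s = [1..<Suc m]"
    unfolding contains_iff_subseq by blast
  have "m = card (set (standardize s))" using s(2) by (simp del: upt_Suc)
  also have "\<dots> \<le> card (set s)" unfolding standardize_def by (simp add: card_image_le)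
  also have "\<dots> \<le> card (set w)" using s(1) by (intro card_mono) (auto dest: list_emb_set)
  also have "\<dots> = max_letter w" using set_is_rgf[OF R] by simp
  finally show "m \<le> max_letter w" .
next
  assume "m \<le> max_letter w"
  then show "contains w [1..<Suc m]"
    using subseq_upt_rgf[OF R] standardize_upt unfolding contains_iff_subseq by blast
qed

lemma RGF_avoiding_upt: "RGF_avoiding [1..<Suc m] n = {w \<in> RGF n. max_letter w < m}"
  unfolding RGF_avoiding_def RGF_def using contains_upt_iff by (auto simp del: upt_Suc)

lemma card_RGF_max_letter_Suc:
  assumes k: "0 < k"
  shows "card {w \<in> RGF (Suc n). max_letter w = k} =
         k * card {u \<in> RGF n. max_letter u = k} + card {u \<in> RGF n. max_letter u = k - 1}"
proof -
  let ?A = "{u \<in> RGF n. max_letter u = k} \<times> {1..k}"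
  let ?B = "{u \<in> RGF n. max_letter u = k - 1}"
  let ?f = "\<lambda>(u, x). u @ [x::nat]"
  let ?g = "\<lambda>u. u @ [k]"
  have eq: "{w \<in> RGF (Suc n). max_letter w = k} = ?f ` ?A \<union> ?g ` ?B"
  proof (intro set_eqI iffI)
    fix w assume "w \<in> {w \<in> RGF (Suc n). max_letter w = k}"
    then have w: "w \<in> RGF (Suc n)" "max_letter w = k" by auto
    obtain u x where ux: "w = u @ [x]" "u \<in> RGF n" "0 < x" "x \<le> Suc (max_letter u)"
      using w(1) by (rule RGF_SucE)
    show "w \<in> ?f ` ?A \<union> ?g ` ?B"
    proof (cases "max_letter u = k")
      case True
      then have "(u, x) \<in> ?A" using ux w(2) by auto
      then show ?thesis using ux by force
    next
      case False
      then show ?thesis using ux w(2) by auto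
    qed
  next
    fix w assume "w \<in> ?f ` ?A \<union> ?g ` ?B"
    then show "w \<in> {w \<in> RGF (Suc n). max_letter w = k}"
      using k by (auto simp: snoc_in_RGF_Suc_iff)
  qed
  have "?f ` ?A \<inter> ?g ` ?B = {}" using k by auto
  moreover have "inj_on ?f ?A" "inj_on ?g ?B" by (auto intro: inj_onI)
  ultimately have "card {w \<in> RGF (Suc n). max_letter w = k} = card ?A + card ?B"
    unfolding eq using finite_RGF by (simp add: card_Un_disjoint card_image)
  then show ?thesis by (simp add: card_cartesian_product)
qed

lemma card_RGF_max_letter_eq_Stirling: "card {w \<in> RGF n. max_letter w = k} = Stirling n k"
proof (induction n arbitrary: k)
  case 0
  have "{w \<in> RGF 0. max_letter w = k} = (if k = 0 then {[]} else {})" by (auto simp: RGF_def)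
  moreover have "Stirling 0 k = (if k = 0 then 1 else 0)" by (cases k) simp_all
  ultimately show ?case by simp
next
  case (Suc n)
  show ?case
  proof (cases k)
    case 0
    have "{w \<in> RGF (Suc n). max_letter w = 0} = {}" by (auto dest: max_letter_RGF_Suc_pos)
    then show ?thesis unfolding 0 by (metis Stirling.simps(3) card.empty)
  next
    case (Suc k')
    then show ?thesis using card_RGF_max_letter_Suc[of k n] Suc.IH by simp
  qed
qed

lemma card_RGF_avoiding_upt: "card (RGF_avoiding [1..<Suc m] n) = (\<Sum>k < m. Stirling n k)"
proof (induction m)
  case (Suc m)
  have "{w \<in> RGF n. max_letter w < Suc m} =
        {w \<in> RGF n. max_letter w < m} \<union> {w \<in> RGF n. max_letter w = m}" by auto
  then have "card {w \<in> RGF n. max_letter w < Suc m} =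
             card {w \<in> RGF n. max_letter w < m} + card {w \<in> RGF n. max_letter w = m}"
    using finite_RGF by (simp add: card_Un_disjoint disjoint_iff)
  then show ?case
    using Suc.IH card_RGF_max_letter_eq_Stirling unfolding RGF_avoiding_upt by simp
qed (unfold RGF_avoiding_upt, simp)

definition Stirling_annihilator :: "nat \<Rightarrow> rat poly" where
  "Stirling_annihilator k = (\<Prod>j\<in>{1..k}. [:- of_nat j, 1:])"

lemma shift_apply_Stirling_annihilator:
  "shift_apply (Stirling_annihilator k) (\<lambda>n. of_nat (Stirling n k)) n = (if n = 0 then 1 else 0)"
proof (induction k arbitrary: n)
  case 0
  show ?case unfolding Stirling_annihilator_def by (cases n) (simp_all add: shift_apply_1)
next
  case (Suc k)
  have "{1..Suc k} = insert (Suc k) {1..k}" by auto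
  then have split: "Stirling_annihilator (Suc k) = Stirling_annihilator k * [:- of_nat (Suc k), 1:]"
    unfolding Stirling_annihilator_def by (simp add: mult.commute)
  have step: "shift_apply [:- of_nat (Suc k), 1:] (\<lambda>n. of_nat (Stirling n (Suc k))) n' =
              of_nat (Stirling n' k)" for n'
    unfolding shift_apply_linear by (simp add: algebra_simps)
  have "shift_apply (Stirling_annihilator (Suc k)) (\<lambda>n. of_nat (Stirling n (Suc k))) n =
        shift_apply (Stirling_annihilator k)
          (shift_apply [:- of_nat (Suc k), 1:] (\<lambda>n. of_nat (Stirling n (Suc k)))) n"
    unfolding split by (rule shift_apply_mult)
  also have "\<dots> = shift_apply (Stirling_annihilator k) (\<lambda>n. of_nat (Stirling n k)) n"
    unfolding step ..
  finally show ?case using Suc.IH by simp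
qed

lemma shift_apply_Stirling_annihilator_vanishes:
  assumes "k < m" "1 \<le> n"
  shows "shift_apply (Stirling_annihilator (m - 1)) (\<lambda>n. of_nat (Stirling n k)) n = 0"
proof -
  define R where "R = (\<Prod>j\<in>{Suc k..m - 1}. [:- of_nat j, 1::rat:])"
  have "{1..m - 1} = {1..k} \<union> {Suc k..m - 1}" "{1..k} \<inter> {Suc k..m - 1} = {}" using assms by auto
  then have "Stirling_annihilator (m - 1) = R * Stirling_annihilator k"
    unfolding Stirling_annihilator_def R_def by (simp add: prod.union_disjoint mult.commute)
  moreover have "shift_apply (Stirling_annihilator k) (\<lambda>n. of_nat (Stirling n k)) =
                 (\<lambda>n. if n = 0 then 1 else 0)"
    by (rule ext) (rule shift_apply_Stirling_annihilator)
  ultimately have "shift_apply (Stirling_annihilator (m - 1)) (\<lambda>n. of_nat (Stirling n k)) n =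
             shift_apply R (\<lambda>n. if n = 0 then 1 else 0) n"
    by (simp only: shift_apply_mult)
  also have "\<dots> = 0" unfolding shift_apply_def using assms by simp
  finally show ?thesis .
qed

lemma P_recursive_sum_Stirling: "P_recursive (\<lambda>n. \<Sum>k < m. Stirling n k)"
proof (rule P_recursiveI_shift_apply)
  show "Stirling_annihilator (m - 1) \<noteq> 0"
    unfolding Stirling_annihilator_def by (simp add: prod_zero_iff)
  fix n :: nat assume n: "1 \<le> n"
  have "shift_apply (Stirling_annihilator (m - 1)) (\<lambda>n. of_nat (\<Sum>k < m. Stirling n k)) n =
        (\<Sum>k < m. shift_apply (Stirling_annihilator (m - 1)) (\<lambda>n. of_nat (Stirling n k)) n)"
    unfolding of_nat_sum by (rule shift_apply_sum) simp
  also have "\<dots> = 0"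
    using n by (intro sum.neutral ballI shift_apply_Stirling_annihilator_vanishes) simp_all
  finally show
    "shift_apply (Stirling_annihilator (m - 1)) (\<lambda>n. of_nat (\<Sum>k < m. Stirling n k)) n = 0" .
qed

lemma rgf_singletons_part: "rgf (singletons_part m) = [1..<Suc m]"
proof -
  let ?\<sigma> = "singletons_part m"
  have P: "partition_on {1..m} ?\<sigma>" unfolding singletons_part_def by (rule partition_on_singletons)
  then have \<sigma>: "?\<sigma> \<in> Pi_set m" unfolding Pi_set_def by simp
  have "block_rank ?\<sigma> (block_of ?\<sigma> i) = i" if "i \<in> set [1..<Suc m]" for i
  proof -
    have i: "i \<in> {1..m}" using that by auto
    have "block_of ?\<sigma> i = {i}" using block_of_eq[OF P, of "{i}" i] i unfolding singletons_part_def
      by auto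
    moreover have "{C \<in> ?\<sigma>. Min C \<le> Min {i}} = (\<lambda>j. {j}) ` {1..i}"
      unfolding singletons_part_def using i by auto
    ultimately show ?thesis unfolding block_rank_def by (simp add: card_image)
  qed
  then have "rgf ?\<sigma> = map (\<lambda>i. i) [1..<Suc m]" unfolding rgf_eq_map[OF \<sigma>]
    by (rule map_cong[OF refl])
  then show ?thesis by simp
qed

lemma P_recursive_R_avoid_singletons_part: "P_recursive (\<lambda>n. card (R_avoid n (singletons_part m)))"
  unfolding card_R_avoid rgf_singletons_part card_RGF_avoiding_upt
    by (rule P_recursive_sum_Stirling)

section \<open>Avoiding \<open>1 1 \<dots> 1\<close>\<close>

lemma rgf_one_block_part:
  assumes m: "1 \<le> m"
  shows "rgf (one_block_part m) = replicate m 1"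
proof -
  let ?\<sigma> = "one_block_part m"
  have P: "partition_on {1..m} ?\<sigma>" unfolding one_block_part_def using m
    by (simp add: partition_on_space)
  then have \<sigma>: "?\<sigma> \<in> Pi_set m" unfolding Pi_set_def by simp
  have "block_rank ?\<sigma> (block_of ?\<sigma> i) = 1" if "i \<in> set [1..<Suc m]" for i
  proof -
    have "block_of ?\<sigma> i = {1..m}"
      using block_of_eq[OF P, of "{1..m}" i] that unfolding one_block_part_def by auto
    moreover have "{C \<in> ?\<sigma>. Min C \<le> Min {1..m}} = {{1..m}}" unfolding one_block_part_def by auto
    ultimately show ?thesis unfolding block_rank_def by simp
  qed
  then have "rgf ?\<sigma> = map (\<lambda>_. 1) [1..<Suc m]" unfolding rgf_eq_map[OF \<sigma>]
    by (rule map_cong[OF refl])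
  then show ?thesis by (simp add: map_replicate_const)
qed

lemma standardize_replicate: "1 \<le> m \<Longrightarrow> standardize (replicate m v) = replicate m 1"
proof -
  have "{y. y = v \<and> y \<le> v} = {v}" by auto
  then show "1 \<le> m \<Longrightarrow> ?thesis" unfolding standardize_def by (simp add: map_replicate_const)
qed

lemma standardize_eq_replicate_1D:
  assumes "standardize s = replicate m 1"
  shows "s = replicate m (s ! 0)"
proof (rule nth_equalityI)
  have L: "length s = m" using arg_cong[OF assms, of length] by simp
  then show "length s = length (replicate m (s ! 0))" by simp
  have one: "card {y \<in> set s. y \<le> s ! i} = 1" if "i < m" for i
    using arg_cong[OF assms, of "\<lambda>l. l ! i"] that L unfolding standardize_def by simp
  have le: "s ! j \<le> s ! i" if "i < m" "j < m" for i j
  proof (rule ccontr)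
    assume "\<not> s ! j \<le> s ! i"
    then have "{s ! i, s ! j} \<subseteq> {y \<in> set s. y \<le> s ! j}" using that L by auto
    then have "card {s ! i, s ! j} \<le> card {y \<in> set s. y \<le> s ! j}" by (rule card_mono[rotated]) simp
    then show False using one[of j] that \<open>\<not> s ! j \<le> s ! i\<close> by (simp add: card_insert_if)
  qed
  fix i assume "i < length s"
  then have "i < m" "0 < m" using L by auto
  then show "s ! i = replicate m (s ! 0) ! i" using le[of i 0] le[of 0 i] by simp
qed

lemma contains_replicate_1_iff:
  assumes m: "1 \<le> m"
  shows "contains w (replicate m 1) \<longleftrightarrow> (\<exists>v. m \<le> count_list w v)"
proof
  assume "contains w (replicate m 1)"
  then obtain s where s: "subseq s w" "standardize s = replicate m 1"
    unfolding contains_iff_subseq by blast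
  define v where "v = s ! 0"
  have "s = replicate m v" using standardize_eq_replicate_1D[OF s(2)] unfolding v_def .
  then have "length (filter ((=) v) s) = m" by simp
  moreover have "length (filter ((=) v) s) \<le> length (filter ((=) v) w)"
    using subseq_filter[OF s(1)] by (rule list_emb_length)
  ultimately show "\<exists>v. m \<le> count_list w v" by (metis count_list_eq_length_filter)
next
  assume "\<exists>v. m \<le> count_list w v"
  then obtain v where v: "m \<le> count_list w v" by blast
  have "filter ((=) v) w = replicate (count_list w v) v"
    unfolding count_list_eq_length_filter by (rule replicate_length_filter[symmetric])
  also have "\<dots> = replicate m v @ replicate (count_list w v - m) v"
    using v by (simp add: replicate_add[symmetric])
  finally have "subseq (replicate m v) w"
    by (metis list_emb_trans subseq_filter_left subseq_order.order_refl subseq_rev_drop_many)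
  then show "contains w (replicate m 1)"
    using standardize_replicate[OF m] unfolding contains_iff_subseq by blast
qed

lemma card_positions: "card (positions w v) = count_list w v"
proof -
  have "positions w v = Suc ` {i. i < length w \<and> v = w ! i}"
  proof (intro set_eqI iffI)
    fix i assume "i \<in> positions w v"
    then show "i \<in> Suc ` {i. i < length w \<and> v = w ! i}"
      unfolding positions_def by (intro image_eqI[of _ _ "i - 1"]) auto
  qed (auto simp: positions_def)
  then have "card (positions w v) = card {i. i < length w \<and> v = w ! i}" by (simp add: card_image)
  then show ?thesis by (simp add: count_list_eq_length_filter length_filter_conv_card)
qed

lemma contains_replicate_1_iff_rgf_blocks:
  assumes m: "1 \<le> m"
  shows "contains w (replicate m 1) \<longleftrightarrow> (\<exists>B\<in>rgf_blocks w. m \<le> card B)"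
  unfolding contains_replicate_1_iff[OF m] rgf_blocks_def
proof
  assume "\<exists>v. m \<le> count_list w v"
  then obtain v where v: "m \<le> count_list w v" by blast
  then have "v \<in> set w" using m count_list_0_iff[of w v] by auto
  then show "\<exists>B\<in>positions w ` set w. m \<le> card B" using v card_positions by auto
next
  assume "\<exists>B\<in>positions w ` set w. m \<le> card B"
  then show "\<exists>v. m \<le> count_list w v" using card_positions by auto
qed

definition bounded_partitions :: "nat \<Rightarrow> nat set \<Rightarrow> nat set set set" where
  "bounded_partitions m S = {\<sigma>. partition_on S \<sigma> \<and> (\<forall>B\<in>\<sigma>. card B < m)}"

lemma R_avoid_one_block_part:
  assumes m: "1 \<le> m"
  shows "R_avoid n (one_block_part m) = bounded_partitions m {1..n}"
proof -
  have "R_avoid n (one_block_part m) = {\<sigma> \<in> Pi_set n. \<not> contains (rgf \<sigma>) (replicate m 1)}"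
    unfolding R_avoid_def rgf_one_block_part[OF m] ..
  also have "\<dots> = {\<sigma> \<in> Pi_set n. \<not> (\<exists>B\<in>\<sigma>. m \<le> card B)}"
    using contains_replicate_1_iff_rgf_blocks[OF m] rgf_blocks_rgf by auto
  also have "\<dots> = bounded_partitions m {1..n}"
    unfolding Pi_set_def bounded_partitions_def by force
  finally show ?thesis .
qed

lemma finite_bounded_partitions: "finite S \<Longrightarrow> finite (bounded_partitions m S)"
  unfolding bounded_partitions_def by (rule finite_subset[OF _ finitely_many_partition_on]) auto

lemma bij_betw_insert_block:
  assumes a: "a \<in> S"
  shows "bij_betw (\<lambda>(B, \<tau>). insert B \<tau>)
           (SIGMA B:{B. a \<in> B \<and> B \<subseteq> S \<and> card B < m}. bounded_partitions m (S - B))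
           (bounded_partitions m S)"
proof (rule bij_betw_byWitness[where f' = "\<lambda>\<sigma>. (block_of \<sigma> a, \<sigma> - {block_of \<sigma> a})"])
  have insert: "partition_on S (insert B \<tau>) \<and> block_of (insert B \<tau>) a = B \<and> B \<notin> \<tau>"
    if "a \<in> B" "B \<subseteq> S" "partition_on (S - B) \<tau>" for B \<tau>
  proof -
    have U: "\<Union>\<tau> = S - B" using partition_onD1[OF that(3)] by simp
    then have "disjnt B (\<Union>\<tau>)" by (auto simp: disjnt_def)
    then have P: "partition_on S (insert B \<tau>)" using partition_on_insert that by blast
    then show ?thesis using block_of_eq[OF P] that(1) U by auto
  qed
  have remove: "block_of \<sigma> a \<in> \<sigma> \<and> a \<in> block_of \<sigma> a \<and> block_of \<sigma> a \<subseteq> S \<and>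
      partition_on (S - block_of \<sigma> a) (\<sigma> - {block_of \<sigma> a})"
    if P: "partition_on S \<sigma>" for \<sigma>
  proof -
    define B where "B = block_of \<sigma> a"
    have B: "B \<in> \<sigma>" "a \<in> B" using block_of_mem[OF P a] unfolding B_def by auto
    have "disjnt B (\<Union>(\<sigma> - {B}))"
      unfolding disjnt_def using disjointD[OF partition_onD2[OF P] B(1)] by blast
    moreover have "insert B (\<sigma> - {B}) = \<sigma>" using B(1) by blast
    ultimately have "partition_on (S - B) (\<sigma> - {B})" using P partition_on_insert by metis
    then show ?thesis using B partition_onD1[OF P] unfolding B_def by blast
  qed
  show "\<forall>x\<in>SIGMA B:{B. a \<in> B \<and> B \<subseteq> S \<and> card B < m}. bounded_partitions m (S - B).
          (\<lambda>\<sigma>. (block_of \<sigma> a, \<sigma> - {block_of \<sigma> a})) ((\<lambda>(B, \<tau>). insert B \<tau>) x) = x"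
    using insert unfolding bounded_partitions_def by auto
  show "\<forall>\<sigma>\<in>bounded_partitions m S.
          (\<lambda>(B, \<tau>). insert B \<tau>) ((\<lambda>\<sigma>. (block_of \<sigma> a, \<sigma> - {block_of \<sigma> a})) \<sigma>) = \<sigma>"
    using remove unfolding bounded_partitions_def by auto
  show "(\<lambda>(B, \<tau>). insert B \<tau>) `
          (SIGMA B:{B. a \<in> B \<and> B \<subseteq> S \<and> card B < m}. bounded_partitions m (S - B))
          \<subseteq> bounded_partitions m S"
    using insert unfolding bounded_partitions_def by auto
  show "(\<lambda>\<sigma>. (block_of \<sigma> a, \<sigma> - {block_of \<sigma> a})) ` bounded_partitions m S
          \<subseteq> (SIGMA B:{B. a \<in> B \<and> B \<subseteq> S \<and> card B < m}. bounded_partitions m (S - B))"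
    using remove unfolding bounded_partitions_def by auto
qed

lemma card_bounded_partitions_split:
  assumes "finite S" "a \<in> S"
  shows "card (bounded_partitions m S) =
         (\<Sum>B\<in>{B. a \<in> B \<and> B \<subseteq> S \<and> card B < m}. card (bounded_partitions m (S - B)))"
proof -
  have "finite {B. a \<in> B \<and> B \<subseteq> S \<and> card B < m}" using assms(1) by (simp add: finite_subset)
  then show ?thesis
    using bij_betw_same_card[OF bij_betw_insert_block[OF assms(2)]] assms(1)
    by (simp add: card_SigmaI finite_bounded_partitions)
qed

lemma sum_subsets_by_card:
  assumes "finite S"
  shows "(\<Sum>C\<in>{C. C \<subseteq> S \<and> P (card C)}. h (card C)) =
         (\<Sum>j\<le>card S. if P j then (card S choose j) * h j else 0)"
proof -
  have fin: "finite {C. C \<subseteq> S \<and> P (card C)}" using assms by simp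
  have "card ` {C. C \<subseteq> S \<and> P (card C)} \<subseteq> {..card S}" using assms by (auto intro: card_mono)
  then have "(\<Sum>C\<in>{C. C \<subseteq> S \<and> P (card C)}. h (card C)) =
             (\<Sum>j\<le>card S. \<Sum>C\<in>{C. C \<subseteq> S \<and> P (card C) \<and> card C = j}. h (card C))"
    by (subst sum.group[OF fin, symmetric]) (auto intro!: sum.cong)
  also have "\<dots> = (\<Sum>j\<le>card S. if P j then (card S choose j) * h j else 0)"
  proof (rule sum.cong[OF refl])
    fix j
    show "(\<Sum>C\<in>{C. C \<subseteq> S \<and> P (card C) \<and> card C = j}. h (card C)) =
          (if P j then (card S choose j) * h j else 0)"
    proof (cases "P j")
      case True
      then have "{C. C \<subseteq> S \<and> P (card C) \<and> card C = j} = {C. C \<subseteq> S \<and> card C = j}" by auto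
      then have "(\<Sum>C\<in>{C. C \<subseteq> S \<and> P (card C) \<and> card C = j}. h (card C)) =
                 (\<Sum>C\<in>{C. C \<subseteq> S \<and> card C = j}. h j)" by simp
      then show ?thesis using True n_subsets[OF assms, of j] by simp
    next
      case False
      then have empty: "{C. C \<subseteq> S \<and> P (card C) \<and> card C = j} = {}" by auto
      show ?thesis unfolding empty using False by simp
    qed
  qed
  finally show ?thesis .
qed

lemma sum_blocks_containing:
  assumes "finite S" "a \<in> S"
  shows "(\<Sum>B\<in>{B. a \<in> B \<and> B \<subseteq> S \<and> P (card B)}. g B) =
         (\<Sum>C\<in>{C. C \<subseteq> S - {a} \<and> P (Suc (card C))}. g (insert a C))"
proof (rule sum.reindex_bij_witness[of _ "insert a" "\<lambda>B. B - {a}"])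
  fix C assume C: "C \<in> {C. C \<subseteq> S - {a} \<and> P (Suc (card C))}"
  then have "a \<notin> C" "finite C" using assms(1) finite_subset by auto
  then show "insert a C - {a} = C" "insert a C \<in> {B. a \<in> B \<and> B \<subseteq> S \<and> P (card B)}"
    using C assms(2) by auto
next
  fix B assume B: "B \<in> {B. a \<in> B \<and> B \<subseteq> S \<and> P (card B)}"
  then have ins: "insert a (B - {a}) = B" by auto
  have "Suc (card (B - {a})) = card B"
    using B assms(1) finite_subset by (intro card_Suc_Diff1) auto
  then show "insert a (B - {a}) = B" "B - {a} \<in> {C. C \<subseteq> S - {a} \<and> P (Suc (card C))}"
    "g (insert a (B - {a})) = g B"
    using B ins by auto
qed

lemma sum_blocks_containing_by_card:
  assumes "finite S" "a \<in> S" "card S = Suc n"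
  shows "(\<Sum>B\<in>{B. a \<in> B \<and> B \<subseteq> S \<and> card B < m}. h (card S - card B)) =
         (\<Sum>j\<le>n. if Suc j < m then (n choose j) * h (n - j) else 0)"
proof -
  have "(\<Sum>B\<in>{B. a \<in> B \<and> B \<subseteq> S \<and> card B < m}. h (card S - card B)) =
        (\<Sum>C\<in>{C. C \<subseteq> S - {a} \<and> Suc (card C) < m}. h (card S - card (insert a C)))"
    by (rule sum_blocks_containing[OF assms(1,2), where P = "\<lambda>j. j < m", simplified])
  also have "\<dots> = (\<Sum>C\<in>{C. C \<subseteq> S - {a} \<and> Suc (card C) < m}. h (n - card C))"
  proof (rule sum.cong[OF refl])
    fix C assume "C \<in> {C. C \<subseteq> S - {a} \<and> Suc (card C) < m}"
    then have "a \<notin> C" "finite C" using assms(1) finite_subset by auto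
    then show "h (card S - card (insert a C)) = h (n - card C)" using assms(3) by simp
  qed
  also have "\<dots> = (\<Sum>j\<le>n. if Suc j < m then (n choose j) * h (n - j) else 0)"
  proof -
    have card_rest: "card (S - {a}) = n" using assms by simp
    show ?thesis
      using sum_subsets_by_card[of "S - {a}" "\<lambda>j. h (n - j)" "\<lambda>j. Suc j < m", unfolded card_rest]
        assms(1) by simp
  qed
  finally show ?thesis .
qed

text \<open>The block of the last element has \<open>j + 1 < m\<close> elements, \<open>j\<close> of them chosen among the
  first \<open>n\<close>.\<close>

fun bounded_partition_count :: "nat \<Rightarrow> nat \<Rightarrow> nat" where
  "bounded_partition_count m 0 = 1"
| "bounded_partition_count m (Suc n) =
    (\<Sum>j\<le>n. if Suc j < m then (n choose j) * bounded_partition_count m (n - j) else 0)"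

lemma card_bounded_partitions:
  "finite S \<Longrightarrow> card (bounded_partitions m S) = bounded_partition_count m (card S)"
proof (induction "card S" arbitrary: S rule: less_induct)
  case less
  show ?case
  proof (cases "card S")
    case 0
    then have "bounded_partitions m S = {{}}"
      using less.prems by (auto simp: bounded_partitions_def partition_on_empty)
    then show ?thesis using 0 by simp
  next
    case (Suc n)
    then obtain a where a: "a \<in> S" by fastforce
    have "card (bounded_partitions m S) =
          (\<Sum>B\<in>{B. a \<in> B \<and> B \<subseteq> S \<and> card B < m}. card (bounded_partitions m (S - B)))"
      by (rule card_bounded_partitions_split[OF less.prems a])
    also have "\<dots> = (\<Sum>B\<in>{B. a \<in> B \<and> B \<subseteq> S \<and> card B < m}.
                       bounded_partition_count m (card S - card B))"
    proof (rule sum.cong[OF refl])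
      fix B assume B: "B \<in> {B. a \<in> B \<and> B \<subseteq> S \<and> card B < m}"
      then have "card (S - B) < card S" using less.prems by (intro psubset_card_mono) auto
      moreover have "card (S - B) = card S - card B"
        using B less.prems finite_subset by (auto intro: card_Diff_subset)
      ultimately show
        "card (bounded_partitions m (S - B)) = bounded_partition_count m (card S - card B)"
        using less.hyps less.prems by simp
    qed
    also have "\<dots> = bounded_partition_count m (Suc n)"
      using sum_blocks_containing_by_card[OF less.prems a Suc] by simp
    finally show ?thesis using Suc by simp
  qed
qed

lemma binomial_poly_exists: "\<exists>p :: rat poly. \<forall>n. poly p (of_nat n) = of_nat ((n + c) choose j)"
proof
  let ?p = "smult (inverse (fact j)) (\<Prod>t < j. [:of_nat c - of_nat j + 1 + of_nat t, 1:])
    :: rat poly"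
  show "\<forall>n. poly ?p (of_nat n) = of_nat ((n + c) choose j)"
  proof
    fix n
    have "of_nat ((n + c) choose j) = (of_nat (n + c) :: rat) gchoose j"
      by (rule binomial_gbinomial)
    also have "\<dots> = pochhammer (of_nat (n + c) - of_nat j + 1) j / fact j"
      by (rule gbinomial_pochhammer')
    also have "\<dots> = (\<Prod>t < j. of_nat (n + c) - of_nat j + 1 + of_nat t) / fact j"
      by (simp add: pochhammer_prod atLeast0LessThan)
    also have "\<dots> = poly ?p (of_nat n)"
      by (simp add: poly_prod divide_inverse mult.commute algebra_simps)
    finally show "poly ?p (of_nat n) = of_nat ((n + c) choose j)" by simp
  qed
qed

lemma bounded_partition_count_recurrence:
  assumes m: "m = d + 2"
  shows "bounded_partition_count m (n + Suc d) =
    (\<Sum>i < Suc d. ((n + d) choose (d - i)) * bounded_partition_count m (n + i))"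
proof -
  let ?a = "bounded_partition_count m"
  have "?a (n + Suc d) = (\<Sum>j\<le>n + d. if Suc j < m then ((n + d) choose j) * ?a (n + d - j) else 0)"
    by simp
  also have "\<dots> = (\<Sum>j\<in>{j \<in> {..n + d}. Suc j < m}. ((n + d) choose j) * ?a (n + d - j))"
    by (rule sum.inter_filter[symmetric]) simp
  also have "{j \<in> {..n + d}. Suc j < m} = {..<Suc d}" using m by auto
  also have "(\<Sum>j < Suc d. ((n + d) choose j) * ?a (n + d - j)) =
             (\<Sum>i < Suc d. ((n + d) choose (Suc d - Suc i)) * ?a (n + d - (Suc d - Suc i)))"
    by (rule sum.nat_diff_reindex[symmetric])
  also have "\<dots> = (\<Sum>i < Suc d. ((n + d) choose (d - i)) * ?a (n + i))"
    by (rule sum.cong[OF refl]) auto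
  finally show ?thesis .
qed

lemma P_recursive_bounded_partition_count: "P_recursive (bounded_partition_count m)"
proof (cases "m < 2")
  case True
  then have "of_nat (bounded_partition_count m (n + 1)) =
             (\<Sum>i < 1. poly (0 :: rat poly) (of_nat n) * of_nat (bounded_partition_count m (n + i)))"
    for n by simp
  then show ?thesis by (rule P_recursiveI_recurrence)
next
  case False
  define d where "d = m - 2"
  have d: "m = d + 2" using False unfolding d_def by simp
  have "\<forall>i. \<exists>p :: rat poly. \<forall>n. poly p (of_nat n) = of_nat ((n + d) choose (d - i))"
    using binomial_poly_exists by blast
  then obtain Q :: "nat \<Rightarrow> rat poly"
    where Q: "\<And>i n. poly (Q i) (of_nat n) = of_nat ((n + d) choose (d - i))"
    using choice[OF \<open>\<forall>i. _\<close>] by blast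
  have "of_nat (bounded_partition_count m (n + Suc d)) =
        (\<Sum>i < Suc d. poly (Q i) (of_nat n) * of_nat (bounded_partition_count m (n + i)))" for n
    unfolding bounded_partition_count_recurrence[OF d] Q by simp
  then show ?thesis by (rule P_recursiveI_recurrence)
qed

lemma P_recursive_R_avoid_one_block_part:
  assumes "1 \<le> m"
  shows "P_recursive (\<lambda>n. card (R_avoid n (one_block_part m)))"
proof -
  have "card (R_avoid n (one_block_part m)) = bounded_partition_count m n" for n
    unfolding R_avoid_one_block_part[OF assms] by (simp add: card_bounded_partitions)
  then show ?thesis using P_recursive_bounded_partition_count by simp
qed

section \<open>Patterns of length three\<close>

lemma card_snoc_doubling:
  assumes step: "\<And>u x. u \<in> RGF (Suc n) \<Longrightarrow>
      u @ [x] \<in> RGF (Suc (Suc n)) \<and> Q (u @ [x]) \<longleftrightarrow> Q u \<and> (x = f u \<or> x = g u)"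
    and distinct: "\<And>u. u \<in> RGF (Suc n) \<Longrightarrow> f u \<noteq> g u"
  shows "card {w \<in> RGF (Suc (Suc n)). Q w} = 2 * card {u \<in> RGF (Suc n). Q u}"
proof -
  let ?A = "{u \<in> RGF (Suc n). Q u}"
  have "{w \<in> RGF (Suc (Suc n)). Q w} = (\<lambda>u. u @ [f u]) ` ?A \<union> (\<lambda>u. u @ [g u]) ` ?A"
  proof (intro set_eqI iffI)
    fix w assume w: "w \<in> {w \<in> RGF (Suc (Suc n)). Q w}"
    then obtain u x where "w = u @ [x]" "u \<in> RGF (Suc n)" by (auto elim: RGF_SucE)
    then show "w \<in> (\<lambda>u. u @ [f u]) ` ?A \<union> (\<lambda>u. u @ [g u]) ` ?A" using step w by auto
  qed (use step in auto)
  moreover have "(\<lambda>u. u @ [f u]) ` ?A \<inter> (\<lambda>u. u @ [g u]) ` ?A = {}" using distinct by auto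
  moreover have "inj_on (\<lambda>u. u @ [f u]) ?A" "inj_on (\<lambda>u. u @ [g u]) ?A" by (auto intro: inj_onI)
  ultimately show ?thesis using finite_RGF by (simp add: card_Un_disjoint card_image)
qed

lemma avoids_121_iff_sorted: "w \<in> RGF n \<Longrightarrow> \<not> contains w [1, 2, 1] \<longleftrightarrow> sorted w"
proof -
  assume wR: "w \<in> RGF n"
  then have R: "is_rgf w" unfolding RGF_def by simp
  show ?thesis unfolding contains_121_iff
  proof
    assume nt: "\<not> has_triple (\<lambda>x y z. x = z \<and> x < y) w"
    show "sorted w"
    proof (rule ccontr)
      assume "\<not> sorted w"
      then obtain j where j: "Suc j < length w" "\<not> w ! j \<le> w ! Suc j" unfolding sorted_iff_nth_Suc
        by blast
      have "0 < w ! Suc j" using RGF_pos[OF wR] j(1) by simp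
      then obtain q where q: "q < j" "w ! q = w ! Suc j"
        using is_rgf_earlier_occurrence[OF R, of j "w ! Suc j"] j by auto
      have "has_triple (\<lambda>x y z. x = z \<and> x < y) w" unfolding has_triple_def
        using q j by (intro exI[of _ q] exI[of _ j] exI[of _ "Suc j"]) simp
      then show False using nt by simp
    qed
  next
    assume s: "sorted w"
    show "\<not> has_triple (\<lambda>x y z. x = z \<and> x < y) w"
    proof
      assume "has_triple (\<lambda>x y z. x = z \<and> x < y) w"
      then obtain i j k where "i < j" "j < k" "k < length w" "w ! i = w ! k" "w ! i < w ! j"
        unfolding has_triple_def by blast
      moreover have "w ! j \<le> w ! k" using sorted_nth_mono[OF s, of j k] calculation by simp
      ultimately show False by simp
    qed
  qed
qed

lemma sorted_le_last:
  assumes "sorted u" "y \<in> set u"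
  shows "y \<le> last u"
proof -
  obtain i where i: "i < length u" "y = u ! i" using assms(2) by (auto simp: in_set_conv_nth)
  then have "u \<noteq> []" by auto
  then show ?thesis using sorted_nth_mono[OF assms(1), of i "length u - 1"] i
    by (simp add: last_conv_nth)
qed

lemma sorted_snoc_iff_last: "u \<noteq> [] \<Longrightarrow> sorted (u @ [x]) \<longleftrightarrow> sorted u \<and> last u \<le> x"
  using sorted_le_last by (auto simp: sorted_append intro: order.trans)

lemma max_letter_sorted: "sorted u \<Longrightarrow> u \<noteq> [] \<Longrightarrow> max_letter u = last u"
  using sorted_le_last[OF _ max_letter_in_set] max_letter_ge[of "last u" u] by (simp add: antisym)

lemma card_RGF_avoiding_121_Suc_Suc:
  "card (RGF_avoiding [1, 2, 1] (Suc (Suc n))) = 2 * card (RGF_avoiding [1, 2, 1] (Suc n))"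
proof -
  have "RGF_avoiding [1, 2, 1] m = {w \<in> RGF m. sorted w}" for m
    unfolding RGF_avoiding_def using avoids_121_iff_sorted by blast
  moreover have "card {w \<in> RGF (Suc (Suc n)). sorted w} = 2 * card {u \<in> RGF (Suc n). sorted u}"
  proof (rule card_snoc_doubling)
    fix u x assume u: "u \<in> RGF (Suc n)"
    then have ne: "u \<noteq> []" unfolding RGF_def by auto
    then have pos: "0 < last u" using RGF_pos[OF u, of "last u"] by simp
    show "u @ [x] \<in> RGF (Suc (Suc n)) \<and> sorted (u @ [x]) \<longleftrightarrow>
               sorted u \<and> (x = last u \<or> x = Suc (last u))"
      using u ne pos by (auto simp: snoc_in_RGF_Suc_iff sorted_snoc_iff_last max_letter_sorted)
  qed simp
  ultimately show ?thesis by simp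
qed

definition only_1_repeats :: "nat list \<Rightarrow> bool" where
  "only_1_repeats w \<longleftrightarrow> (\<forall>i j. i < j \<and> j < length w \<and> w ! i = w ! j \<longrightarrow> w ! i = 1)"

lemma avoids_122_iff_only_1_repeats: "w \<in> RGF n \<Longrightarrow> \<not> contains w [1, 2, 2] \<longleftrightarrow> only_1_repeats w"
proof -
  assume wR: "w \<in> RGF n"
  then have R: "is_rgf w" unfolding RGF_def by simp
  show ?thesis unfolding contains_122_iff
  proof
    assume nt: "\<not> has_triple (\<lambda>x y z. y = z \<and> x < y) w"
    show "only_1_repeats w" unfolding only_1_repeats_def
    proof (intro allI impI)
      fix i j assume ij: "i < j \<and> j < length w \<and> w ! i = w ! j"
      show "w ! i = 1"
      proof (rule ccontr)
        assume "w ! i \<noteq> 1"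
        moreover have "0 < w ! i" using RGF_pos[OF wR] ij by simp
        ultimately have "1 < w ! i" by simp
        then obtain q where q: "q < i" "w ! q = 1" using is_rgf_earlier_occurrence[OF R, of i 1] ij
          by auto
        have "has_triple (\<lambda>x y z. y = z \<and> x < y) w" unfolding has_triple_def
          using q ij \<open>1 < w ! i\<close> by (intro exI[of _ q] exI[of _ i] exI[of _ j]) simp
        then show False using nt by simp
      qed
    qed
  next
    assume Q: "only_1_repeats w"
    show "\<not> has_triple (\<lambda>x y z. y = z \<and> x < y) w"
    proof
      assume "has_triple (\<lambda>x y z. y = z \<and> x < y) w"
      then obtain i j k where ijk: "i < j" "j < k" "k < length w" "w ! j = w ! k" "w ! i < w ! j"
        unfolding has_triple_def by blast
      then have "w ! j = 1" using Q unfolding only_1_repeats_def by blast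
      moreover have "0 < w ! i" using RGF_pos[OF wR] ijk by simp
      ultimately show False using ijk by simp
    qed
  qed
qed

lemma only_1_repeats_snoc:
  "only_1_repeats (u @ [x]) \<longleftrightarrow> only_1_repeats u \<and> (\<forall>i < length u. u ! i = x \<longrightarrow> x = 1)"
proof
  assume Q: "only_1_repeats (u @ [x])"
  have "only_1_repeats u" unfolding only_1_repeats_def
  proof (intro allI impI)
    fix i j assume "i < j \<and> j < length u \<and> u ! i = u ! j"
    then show "u ! i = 1" using Q[unfolded only_1_repeats_def, rule_format, of i j]
      by (simp add: nth_append)
  qed
  moreover have "\<forall>i < length u. u ! i = x \<longrightarrow> x = 1"
  proof (intro allI impI)
    fix i assume "i < length u" "u ! i = x"
    then show "x = 1" using Q[unfolded only_1_repeats_def, rule_format, of i "length u"]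
      by (simp add: nth_append)
  qed
  ultimately show "only_1_repeats u \<and> (\<forall>i < length u. u ! i = x \<longrightarrow> x = 1)" by simp
next
  assume H: "only_1_repeats u \<and> (\<forall>i < length u. u ! i = x \<longrightarrow> x = 1)"
  show "only_1_repeats (u @ [x])" unfolding only_1_repeats_def
  proof (intro allI impI)
    fix i j assume ij: "i < j \<and> j < length (u @ [x]) \<and> (u @ [x]) ! i = (u @ [x]) ! j"
    show "(u @ [x]) ! i = 1"
    proof (cases "j < length u")
      case True
      then have "i < length u" using ij by simp
      have "u ! i = u ! j" using ij True \<open>i < length u\<close> by (simp add: nth_append)
      then have "u ! i = 1" using H \<open>i < length u\<close> True ij unfolding only_1_repeats_def by blast
      then show ?thesis using \<open>i < length u\<close> by (simp add: nth_append)
    next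
      case False
      then have j: "j = length u" using ij by simp
      then have i: "i < length u" using ij by simp
      have "u ! i = x" using ij j i by (simp add: nth_append)
      then have "x = 1" using H i by blast
      then show ?thesis using i \<open>u ! i = x\<close> by (simp add: nth_append)
    qed
  qed
qed

lemma card_RGF_avoiding_122_Suc_Suc:
  "card (RGF_avoiding [1, 2, 2] (Suc (Suc n))) = 2 * card (RGF_avoiding [1, 2, 2] (Suc n))"
proof -
  have "RGF_avoiding [1, 2, 2] m = {w \<in> RGF m. only_1_repeats w}" for m
    unfolding RGF_avoiding_def using avoids_122_iff_only_1_repeats by blast
  moreover have "card {w \<in> RGF (Suc (Suc n)). only_1_repeats w} =
                 2 * card {u \<in> RGF (Suc n). only_1_repeats u}"
  proof (rule card_snoc_doubling)
    fix u x assume u: "u \<in> RGF (Suc n)"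
    have "x \<in> set u \<longleftrightarrow> 0 < x \<and> x \<le> max_letter u" using u set_is_rgf unfolding RGF_def by auto
    then show "u @ [x] \<in> RGF (Suc (Suc n)) \<and> only_1_repeats (u @ [x]) \<longleftrightarrow>
               only_1_repeats u \<and> (x = 1 \<or> x = Suc (max_letter u))"
      using u by (auto simp: snoc_in_RGF_Suc_iff only_1_repeats_snoc in_set_conv_nth)
  next
    show "1 \<noteq> Suc (max_letter u)" if "u \<in> RGF (Suc n)" for u
      using max_letter_RGF_Suc_pos[OF that] by simp
  qed
  ultimately show ?thesis by simp
qed

lemma max_letter_map_Suc: "max_letter (map Suc v) = (if v = [] then 0 else Suc (max_letter v))"
proof (induction v)
  case (Cons a v)
  then show ?case by (cases "v = []") (simp_all add: max_letter_Cons)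
qed simp

lemma is_rgf_Cons_1_map_Suc: "(\<forall>x\<in>set v. 0 < x) \<Longrightarrow> is_rgf (1 # map Suc v) \<longleftrightarrow> is_rgf v"
proof (induction v rule: rev_induct)
  case Nil
  have "is_rgf ([] @ [1])" unfolding is_rgf_snoc by simp
  then show ?case by simp
next
  case (snoc x v)
  then have IH: "is_rgf (1 # map Suc v) \<longleftrightarrow> is_rgf v" and x: "0 < x" by auto
  have e: "1 # map Suc (v @ [x]) = (1 # map Suc v) @ [Suc x]" by simp
  have m: "max_letter (1 # map Suc v) = (if v = [] then 1 else Suc (max_letter v))"
    by (simp add: max_letter_Cons max_letter_map_Suc)
  show ?case unfolding e is_rgf_snoc IH using x m by auto
qed

lemma has_triple_112_snoc_1:
  assumes "u \<in> RGF n"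
  shows "has_triple (\<lambda>x y z. x = y \<and> y < z) (u @ [1]) \<longleftrightarrow> has_triple (\<lambda>x y z. x = y \<and> y < z) u"
proof -
  have "0 < u ! j" if "j < length u" for j using RGF_pos[OF assms nth_mem[OF that]] .
  then have "\<not> (\<exists>i j. i < j \<and> j < length u \<and> u ! i = u ! j \<and> u ! j < 1)" by fastforce
  then show ?thesis unfolding has_triple_snoc by blast
qed

lemma has_triple_112_Cons_1_map_Suc:
  assumes "\<forall>a\<in>set v. 0 < a"
  shows "has_triple (\<lambda>x y z. x = y \<and> y < z) (1 # map Suc v) \<longleftrightarrow>
         has_triple (\<lambda>x y z. x = y \<and> y < z) v"
proof -
  let ?P = "\<lambda>x y z. x = y \<and> y < z"
  have pos: "0 < v ! j" if "j < length v" for j using assms nth_mem[OF that] by blast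
  have "\<not> (\<exists>j k. j < k \<and> k < length (map Suc v) \<and> ?P 1 (map Suc v ! j) (map Suc v ! k))"
  proof
    assume "\<exists>j k. j < k \<and> k < length (map Suc v) \<and> ?P 1 (map Suc v ! j) (map Suc v ! k)"
    then obtain j k where "j < k" "k < length v" "1 = map Suc v ! j" by auto
    then show False using pos[of j] by simp
  qed
  then have "has_triple ?P (1 # map Suc v) \<longleftrightarrow> has_triple ?P (map Suc v)"
    unfolding has_triple_Cons by blast
  also have "\<dots> \<longleftrightarrow> has_triple ?P v" unfolding has_triple_map by simp
  finally show ?thesis .
qed

text \<open>A word avoiding \<open>1 1 2\<close> that does not end in \<open>1\<close> has a single \<open>1\<close>: any other
  \<open>1\<close> would form the pattern with the last letter.\<close>

lemma avoids_112_not_last_1: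
  assumes w: "w \<in> RGF n" and avoid: "\<not> has_triple (\<lambda>x y z. x = y \<and> y < z) w"
    and last: "last w \<noteq> 1" and ne: "w \<noteq> []"
  obtains v where "w = 1 # map Suc v" "\<forall>a\<in>set v. 0 < a"
proof -
  have R: "is_rgf w" using w unfolding RGF_def by simp
  have w0: "w ! 0 = 1" using is_rgf_nth_0[OF R ne] .
  have pos: "0 < a" if "a \<in> set w" for a using RGF_pos[OF w that] .
  have "1 < last w" using pos[of "last w"] last ne by simp
  have gt1: "1 < w ! j" if j: "0 < j" "j < length w" for j
  proof (rule ccontr)
    assume "\<not> 1 < w ! j"
    then have wj: "w ! j = 1" using pos[of "w ! j"] j by simp
    moreover have "last w = w ! (length w - 1)" using ne by (simp add: last_conv_nth)
    ultimately have "j \<noteq> length w - 1" using \<open>1 < last w\<close> by auto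
    then have "j < length w - 1" using j(2) by simp
    then have "has_triple (\<lambda>x y z. x = y \<and> y < z) w"
      unfolding has_triple_def using j w0 wj \<open>1 < last w\<close> ne
      by (intro exI[of _ 0] exI[of _ j] exI[of _ "length w - 1"]) (simp add: last_conv_nth)
    then show False using avoid by simp
  qed
  define v where "v = map (\<lambda>a. a - 1) (tl w)"
  have "\<forall>a\<in>set (tl w). 1 < a" using gt1 ne by (auto simp: in_set_conv_nth nth_tl)
  then have v: "map Suc v = tl w" "\<forall>a\<in>set v. 0 < a" unfolding v_def by (auto intro!: map_idI)
  have "w = 1 # tl w" using ne w0 by (cases w) auto
  then have "w = 1 # map Suc v" using v(1) by metis
  then show thesis using that v(2) by blast
qed

lemma RGF_avoiding_112_Suc_Suc:
  "RGF_avoiding [1, 1, 2] (Suc (Suc n)) =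
    (\<lambda>u. u @ [1]) ` RGF_avoiding [1, 1, 2] (Suc n) \<union>
    (\<lambda>v. 1 # map Suc v) ` RGF_avoiding [1, 1, 2] (Suc n)"
proof -
  let ?P = "\<lambda>x y z. x = y \<and> y < z"
  let ?A = "{u \<in> RGF (Suc n). \<not> has_triple ?P u}"
  have avoiding: "RGF_avoiding [1, 1, 2] m = {w \<in> RGF m. \<not> has_triple ?P w}" for m
    unfolding RGF_avoiding_def contains_112_iff ..
  have Cons_RGF: "1 # map Suc v \<in> RGF (Suc (Suc n)) \<longleftrightarrow> v \<in> RGF (Suc n)"
    if "\<forall>a\<in>set v. 0 < a" for v
    using is_rgf_Cons_1_map_Suc[OF that] unfolding RGF_def by simp
  have "{w \<in> RGF (Suc (Suc n)). \<not> has_triple ?P w} =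
        (\<lambda>u. u @ [1]) ` ?A \<union> (\<lambda>v. 1 # map Suc v) ` ?A"
  proof (intro set_eqI iffI)
    fix w assume w: "w \<in> {w \<in> RGF (Suc (Suc n)). \<not> has_triple ?P w}"
    then obtain u x where ux: "w = u @ [x]" "u \<in> RGF (Suc n)" by (auto elim: RGF_SucE)
    show "w \<in> (\<lambda>u. u @ [1]) ` ?A \<union> (\<lambda>v. 1 # map Suc v) ` ?A"
    proof (cases "x = 1")
      case True
      then show ?thesis using w ux has_triple_112_snoc_1[OF ux(2)] by auto
    next
      case False
      then obtain v where v: "w = 1 # map Suc v" "\<forall>a\<in>set v. 0 < a"
        using w ux by (auto elim: avoids_112_not_last_1)
      then have "v \<in> ?A" using w Cons_RGF has_triple_112_Cons_1_map_Suc[OF v(2)] by auto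
      then show ?thesis using v by blast
    qed
  next
    fix w assume "w \<in> (\<lambda>u. u @ [1]) ` ?A \<union> (\<lambda>v. 1 # map Suc v) ` ?A"
    then show "w \<in> {w \<in> RGF (Suc (Suc n)). \<not> has_triple ?P w}"
    proof
      assume "w \<in> (\<lambda>u. u @ [1]) ` ?A"
      then show ?thesis using has_triple_112_snoc_1 by (auto simp: snoc_in_RGF_Suc_iff)
    next
      assume "w \<in> (\<lambda>v. 1 # map Suc v) ` ?A"
      then obtain v where v: "w = 1 # map Suc v" "v \<in> ?A" by blast
      then have "\<forall>a\<in>set v. 0 < a" using RGF_pos by blast
      then show ?thesis using v Cons_RGF has_triple_112_Cons_1_map_Suc by auto
    qed
  qed
  then show ?thesis unfolding avoiding .
qed

lemma card_RGF_avoiding_112_Suc_Suc: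
  "card (RGF_avoiding [1, 1, 2] (Suc (Suc n))) = 2 * card (RGF_avoiding [1, 1, 2] (Suc n))"
proof -
  let ?A = "RGF_avoiding [1, 1, 2] (Suc n)"
  have "u @ [1] \<noteq> 1 # map Suc v" if "v \<in> ?A" for u v
  proof
    assume "u @ [1] = 1 # map Suc v"
    then have "last (1 # map Suc v) = 1" by (metis last_snoc)
    moreover have "v \<noteq> []" using that unfolding RGF_avoiding_def RGF_def by auto
    moreover have "0 < last v"
      using that RGF_pos[of v "Suc n" "last v"] \<open>v \<noteq> []\<close> unfolding RGF_avoiding_def by simp
    ultimately show False by (simp add: last_map)
  qed
  then have "(\<lambda>u. u @ [1]) ` ?A \<inter> (\<lambda>v. 1 # map Suc v) ` ?A = {}" by blast
  moreover have "inj_on (\<lambda>u. u @ [1]) ?A" "inj_on (\<lambda>v. 1 # map Suc v) ?A" by (auto intro: inj_onI)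
  moreover have "finite ?A" using finite_RGF unfolding RGF_avoiding_def by simp
  ultimately show ?thesis
    unfolding RGF_avoiding_112_Suc_Suc by (simp add: card_Un_disjoint card_image)
qed

lemma RGF_3_cases:
  assumes "w \<in> RGF 3"
  shows "w \<in> {[1, 1, 1], [1, 1, 2], [1, 2, 1], [1, 2, 2], [1, 2, 3]}"
proof -
  have "w \<in> RGF (Suc (Suc (Suc 0)))" using assms by (simp add: numeral_3_eq_3)
  then obtain u c where w: "w = u @ [c]" "u \<in> RGF (Suc (Suc 0))" "0 < c" "c \<le> Suc (max_letter u)"
    by (rule RGF_SucE)
  obtain t b where u: "u = t @ [b]" "t \<in> RGF (Suc 0)" "0 < b" "b \<le> Suc (max_letter t)"
    using w(2) by (rule RGF_SucE)
  obtain s a where t: "t = s @ [a]" "s \<in> RGF 0" "0 < a" "a \<le> Suc (max_letter s)"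
    using u(2) by (rule RGF_SucE)
  then have "s = []" "a = 1" by (simp_all add: RGF_def)
  then have "w = [1, b, c]" "b \<in> {1, 2}" "c \<in> {1..Suc (max 1 b)}"
    using w u t by (auto simp: max_letter_Cons)
  then show ?thesis by (auto simp: max_def split: if_splits)
qed

lemma P_recursive_R_avoid_Pi_3:
  assumes "\<pi> \<in> Pi_set 3"
  shows "P_recursive (\<lambda>n. card (R_avoid n \<pi>))"
proof -
  have "rgf \<pi> \<in> {[1, 1, 1], [1, 1, 2], [1, 2, 1], [1, 2, 2], [1, 2, 3]}"
    using RGF_3_cases[OF rgf_in_RGF[OF assms]] .
  then consider "rgf \<pi> = rgf (one_block_part 3)" | "rgf \<pi> = [1, 1, 2]" | "rgf \<pi> = [1, 2, 1]"
    | "rgf \<pi> = [1, 2, 2]" | "rgf \<pi> = rgf (singletons_part 3)"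
    using rgf_one_block_part[of 3] rgf_singletons_part[of 3] by (auto simp: numeral_3_eq_3)
  then show ?thesis
  proof cases
    case 1
    then show ?thesis using P_recursive_R_avoid_one_block_part[of 3] by (simp add: card_R_avoid)
  next
    case 2
    show ?thesis unfolding card_R_avoid 2
      by (intro P_recursive_doubling card_RGF_avoiding_112_Suc_Suc)
  next
    case 3
    show ?thesis unfolding card_R_avoid 3
      by (intro P_recursive_doubling card_RGF_avoiding_121_Suc_Suc)
  next
    case 4
    show ?thesis unfolding card_R_avoid 4
      by (intro P_recursive_doubling card_RGF_avoiding_122_Suc_Suc)
  next
    case 5
    then show ?thesis using P_recursive_R_avoid_singletons_part[of 3] by (simp add: card_R_avoid)
  qed
qed

theorem theorem4p4:
  shows "(\<forall>m::nat. m \<ge> 1 \<longrightarrow>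
            P_recursive (\<lambda>n. card (R_avoid n (singletons_part m))) \<and>
            P_recursive (\<lambda>n. card (R_avoid n (one_block_part m))))
       \<and> (\<forall>\<pi>. \<pi> \<in> Pi_set 3 \<longrightarrow> P_recursive (\<lambda>n. card (R_avoid n \<pi>)))"
  using P_recursive_R_avoid_singletons_part P_recursive_R_avoid_one_block_part
    P_recursive_R_avoid_Pi_3 by blast

end
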